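(* Let $n\ge2$, $\alpha\in(0,\frac rn)$ and $M>0$. Let $(\bar m,\bar w)\in\mathcal A_M$ be a minimizer of $e_{0,\alpha,M}:=\inf_{(m,w)\in\mathcal A_M}\mathcal E_0(m,w)$, where $\mathcal E_0(m,w)=\int_{\mathbb R^n}\big(C_Lm|\frac wm|^r-\frac1{\alpha+1}m^{\alpha+1}\big)dx$, and assume there exist $\lambda<0$ and $\bar u\in C^2(\mathbb R^n)$ bounded from below such that $\bar m\in W^{1,p}(\mathbb R^n)$ for all $p\ge1$, $0<\bar m\le c_1e^{-c_2|x|}$ for some $c_1,c_2>0$, $\bar w=-C_Hr'\bar m|\nabla\bar u|^{r'-2}\nabla\bar u$, and $(\bar m,\bar u,\lambda)$ solves $-\Delta u+C_H|\nabla u|^{r'}+\lambda=-m^\alpha$, $\Delta m+C_Hr'\nabla\cdot(m|\nabla u|^{r'-2}\nabla u)=0$, $\int m=M$. Then $(\bar m,\bar w)$ attains the infimum $\Gamma_\alpha$, and $$\Gamma_\alpha=\frac{n\alpha\,(-e_{0,\alpha,M})^{\frac{n\alpha-r}{r}}M^{\frac{(\alpha+1)r-n\alpha}{r}}}{r(1+\alpha)}\Big(\frac{r-n\alpha}{n\alpha}\Big)^{\frac{r-n\alpha}{r}} .$$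
   Context: $r'>1$, $C_H>0$, $r=r'/(r'-1)$, $C_L=\frac1r(r'C_H)^{1/(1-r')}$; $\hat q=\frac n{n-r+1}$ if $r<n$, a fixed number in $(\frac{2n}{n+2},n)$ if $r=n$, $r$ if $r>n$. The integrand $m|w/m|^r$ means $|w|^rm^{1-r}$ where $m>0$, $0$ where $(m,w)=(0,0)$, $+\infty$ where $m=0\ne w$. $\mathcal A$: pairs $(m,w)\in(L^1\cap W^{1,\hat q})(\mathbb R^n)\times L^1(\mathbb R^n)$ with $\int\nabla m\cdot\nabla\varphi=\int w\cdot\nabla\varphi$ for all $\varphi\in C_c^\infty$, $\int|x|^bm<\infty$ for a fixed $b>0$, $m\ge0$, $m\not\equiv0$; $\mathcal A_M=\{(m,w)\in\mathcal A:\int m=M\}$. $\Gamma_\alpha=\inf_{\mathcal A}\frac{(C_L\int m|w/m|^r)^{n\alpha/r}(\int m)^{((\alpha+1)r-n\alpha)/r}}{\int m^{\alpha+1}}$ (equivalently the infimum over $\mathcal A_M$). *)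

theory Defs
  imports "HOL-Analysis.Analysis"
begin

text \<open>Functions on R^n are modelled on an arbitrary Euclidean space 'a, n = DIM('a).\<close>

definition pd :: "'a::euclidean_space \<Rightarrow> ('a \<Rightarrow> real) \<Rightarrow> 'a \<Rightarrow> real" where
  "pd i f x = frechet_derivative f (at x) i"

definition grad :: "('a::euclidean_space \<Rightarrow> real) \<Rightarrow> 'a \<Rightarrow> 'a" where
  "grad f x = (\<Sum>i\<in>Basis. pd i f x *\<^sub>R i)"

definition lap :: "('a::euclidean_space \<Rightarrow> real) \<Rightarrow> 'a \<Rightarrow> real" where
  "lap f x = (\<Sum>i\<in>Basis. pd i (pd i f) x)"

fun pderivs :: "'a::euclidean_space list \<Rightarrow> ('a \<Rightarrow> real) \<Rightarrow> 'a \<Rightarrow> real" where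
  "pderivs [] f = f"
| "pderivs (i # is) f = pd i (pderivs is f)"

text \<open>C^infinity: all iterated partial derivatives exist (and hence are continuous).\<close>
definition smooth_fun :: "('a::euclidean_space \<Rightarrow> real) \<Rightarrow> bool" where
  "smooth_fun f \<longleftrightarrow> (\<forall>is. set is \<subseteq> Basis \<longrightarrow> (\<forall>x. pderivs is f differentiable at x))"

definition test_fun :: "('a::euclidean_space \<Rightarrow> real) \<Rightarrow> bool" where
  "test_fun \<phi> \<longleftrightarrow> smooth_fun \<phi> \<and> bounded {x. \<phi> x \<noteq> 0}"

definition C2_fun :: "('a::euclidean_space \<Rightarrow> real) \<Rightarrow> bool" where
  "C2_fun u \<longleftrightarrow> (\<forall>x. u differentiable at x)
     \<and> (\<forall>i\<in>Basis. \<forall>x. pd i u differentiable at x)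
     \<and> (\<forall>i\<in>Basis. \<forall>j\<in>Basis. continuous_on UNIV (pd j (pd i u)))"

definition Lp :: "real \<Rightarrow> ('a::euclidean_space \<Rightarrow> 'b::{real_normed_vector, second_countable_topology}) \<Rightarrow> bool" where
  "Lp p f \<longleftrightarrow> f \<in> borel_measurable lebesgue \<and> integrable lebesgue (\<lambda>x. norm (f x) powr p)"

definition locint :: "('a::euclidean_space \<Rightarrow> 'b::{real_normed_vector, second_countable_topology}) \<Rightarrow> bool" where
  "locint f \<longleftrightarrow> f \<in> borel_measurable lebesgue \<and>
     (\<forall>K. compact K \<longrightarrow> integrable lebesgue (\<lambda>x. indicator K x * norm (f x)))"

definition weak_grad :: "('a::euclidean_space \<Rightarrow> real) \<Rightarrow> ('a \<Rightarrow> 'a) \<Rightarrow> bool" where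
  "weak_grad m g \<longleftrightarrow> locint m \<and> locint g \<and>
     (\<forall>\<phi>. test_fun \<phi> \<longrightarrow> (\<forall>i\<in>Basis.
        (\<integral>x. m x * pd i \<phi> x \<partial>lebesgue) = - (\<integral>x. (g x \<bullet> i) * \<phi> x \<partial>lebesgue)))"

definition W1p :: "real \<Rightarrow> ('a::euclidean_space \<Rightarrow> real) \<Rightarrow> bool" where
  "W1p p m \<longleftrightarrow> Lp p m \<and> (\<exists>g. weak_grad m g \<and> Lp p g)"

definition conj_exp :: "real \<Rightarrow> real" where
  "conj_exp r' = r' / (r' - 1)"

definition C_L :: "real \<Rightarrow> real \<Rightarrow> real" where
  "C_L r' CH = (1 / conj_exp r') * (r' * CH) powr (1 / (1 - r'))"

text \<open>hat q; q0 is the fixed number used when r = n.\<close>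
definition qhat :: "nat \<Rightarrow> real \<Rightarrow> real \<Rightarrow> real" where
  "qhat n r q0 = (if r < real n then real n / (real n - r + 1) else if r = real n then q0 else r)"

definition Lagr :: "real \<Rightarrow> real \<Rightarrow> 'a::euclidean_space \<Rightarrow> ennreal" where
  "Lagr r m w = (if m > 0 then ennreal (norm w powr r * m powr (1 - r))
                 else if w = 0 then 0 else \<infinity>)"

definition kin :: "real \<Rightarrow> ('a::euclidean_space \<Rightarrow> real) \<Rightarrow> ('a \<Rightarrow> 'a) \<Rightarrow> ennreal" where
  "kin r m w = (\<integral>\<^sup>+x. Lagr r (m x) (w x) \<partial>lebesgue)"

definition admissible :: "real \<Rightarrow> real \<Rightarrow> real \<Rightarrow> ('a::euclidean_space \<Rightarrow> real) \<Rightarrow> ('a \<Rightarrow> 'a) \<Rightarrow> bool" where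
  "admissible r q0 b m w \<longleftrightarrow>
     Lp 1 m \<and> W1p (qhat DIM('a) r q0) m \<and> Lp 1 w \<and>
     (\<exists>g. weak_grad m g \<and> Lp (qhat DIM('a) r q0) g \<and>
        (\<forall>\<phi>. test_fun \<phi> \<longrightarrow>
           (\<integral>x. g x \<bullet> grad \<phi> x \<partial>lebesgue) = (\<integral>x. w x \<bullet> grad \<phi> x \<partial>lebesgue))) \<and>
     integrable lebesgue (\<lambda>x. norm x powr b * m x) \<and>
     (\<forall>x. 0 \<le> m x) \<and> \<not> (AE x in lebesgue. m x = 0)"

definition admissible_M :: "real \<Rightarrow> real \<Rightarrow> real \<Rightarrow> real \<Rightarrow> ('a::euclidean_space \<Rightarrow> real) \<Rightarrow> ('a \<Rightarrow> 'a) \<Rightarrow> bool" where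
  "admissible_M r q0 b M m w \<longleftrightarrow> admissible r q0 b m w \<and> (\<integral>x. m x \<partial>lebesgue) = M"

definition E0 :: "real \<Rightarrow> real \<Rightarrow> real \<Rightarrow> ('a::euclidean_space \<Rightarrow> real) \<Rightarrow> ('a \<Rightarrow> 'a) \<Rightarrow> ereal" where
  "E0 r' CH \<alpha> m w = ereal (C_L r' CH) * enn2ereal (kin (conj_exp r') m w)
      - enn2ereal (\<integral>\<^sup>+x. ennreal (m x powr (\<alpha> + 1)) \<partial>lebesgue) / ereal (\<alpha> + 1)"

definition e0 :: "'a::euclidean_space itself \<Rightarrow> real \<Rightarrow> real \<Rightarrow> real \<Rightarrow> real \<Rightarrow> real \<Rightarrow> real \<Rightarrow> ereal" where
  "e0 _ r' CH q0 b \<alpha> M = (INF mw \<in> {(m :: 'a \<Rightarrow> real, w). admissible_M (conj_exp r') q0 b M m w}.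
                           E0 r' CH \<alpha> (fst mw) (snd mw))"

definition GN_quot :: "real \<Rightarrow> real \<Rightarrow> real \<Rightarrow> ('a::euclidean_space \<Rightarrow> real) \<Rightarrow> ('a \<Rightarrow> 'a) \<Rightarrow> ereal" where
  "GN_quot r' CH \<alpha> m w =
     (let r = conj_exp r'; n = real DIM('a) in
      if kin r m w = \<infinity> then \<infinity>
      else ereal ((C_L r' CH * enn2real (kin r m w)) powr (n * \<alpha> / r)
                  * (\<integral>x. m x \<partial>lebesgue) powr (((\<alpha> + 1) * r - n * \<alpha>) / r)
                  / enn2real (\<integral>\<^sup>+x. ennreal (m x powr (\<alpha> + 1)) \<partial>lebesgue)))"

definition Gamma :: "'a::euclidean_space itself \<Rightarrow> real \<Rightarrow> real \<Rightarrow> real \<Rightarrow> real \<Rightarrow> real \<Rightarrow> ereal" where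
  "Gamma _ r' CH q0 b \<alpha> = (INF mw \<in> {(m :: 'a \<Rightarrow> real, w). admissible (conj_exp r') q0 b m w}.
                           GN_quot r' CH \<alpha> (fst mw) (snd mw))"

end

theory Submission
  imports Defs
begin

text \<open>Dilations \<open>(m, w) \<mapsto> (t\<^sup>n m(t x), t\<^sup>n\<^sup>+\<^sup>1 w(t x))\<close> preserve the mass and
  admissibility, and scale the kinetic energy \<open>K\<close> by \<open>u = t\<^sup>r\<close> and the potential energy
  \<open>P = \<integral> m\<^sup>\<alpha>\<^sup>+\<^sup>1\<close> by \<open>u\<^sup>s\<close>, where \<open>s = n\<alpha>/r < 1\<close>. Minimising \<open>C\<^sub>L u K - u\<^sup>s P/(\<alpha>+1)\<close> over
  \<open>u > 0\<close> shows \<open>e\<^sub>0 \<le> -c Q\<^sup>-\<^sup>1\<^sup>/\<^sup>(\<^sup>1\<^sup>-\<^sup>s\<^sup>)\<close> with \<open>Q = (C\<^sub>L K)\<^sup>s / P\<close> for every pair of mass \<open>M\<close>,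
  with equality at the minimiser. So the minimiser minimises \<open>Q\<close> among pairs of mass \<open>M\<close>;
  as the Gagliardo--Nirenberg quotient is \<open>Q M\<^sup>1\<^sup>+\<^sup>\<alpha>\<^sup>-\<^sup>s\<close> and is invariant under
  \<open>m \<mapsto> c m\<close>, the minimiser attains \<open>\<Gamma>\<^sub>\<alpha>\<close>, and solving \<open>e\<^sub>0 = -c Q\<^sup>-\<^sup>1\<^sup>/\<^sup>(\<^sup>1\<^sup>-\<^sup>s\<^sup>)\<close> for \<open>Q\<close>
  gives the formula.\<close>

section \<open>Dilations of Lebesgue integrals\<close>

lemma lebesgue_eq_density_scaleR:
  fixes t :: real assumes t: "t > 0"
  shows "(lebesgue :: 'a::euclidean_space measure) =
     density (distr lebesgue lebesgue (\<lambda>x. t *\<^sub>R x)) (\<lambda>_. ennreal (t ^ DIM('a)))"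
proof -
  have eq: "(\<lambda>x::'a. 0 + (\<Sum>j\<in>Basis. (t * (x \<bullet> j)) *\<^sub>R j)) = (\<lambda>x. t *\<^sub>R x)"
    unfolding scaleR_scaleR[symmetric] scaleR_sum_right[symmetric] euclidean_representation by simp
  have "(\<Prod>j\<in>(Basis::'a set). \<bar>t\<bar>) = t ^ DIM('a)"
    using t by (simp add: prod_constant)
  moreover have "(lebesgue :: 'a measure) = density (distr lebesgue lebesgue
      (\<lambda>x::'a. 0 + (\<Sum>j\<in>Basis. (t * (x \<bullet> j)) *\<^sub>R j))) (\<lambda>_. ennreal (\<Prod>j\<in>(Basis::'a set). \<bar>t\<bar>))"
    by (rule lebesgue_affine_euclidean) (use t in auto)
  ultimately show ?thesis unfolding eq by simp
qed

lemma measurable_comp_scaleR: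
  fixes f :: "'a::euclidean_space \<Rightarrow> 'b::{second_countable_topology, topological_space}"
  assumes "f \<in> borel_measurable lebesgue"
  shows "(\<lambda>x. f (t *\<^sub>R x)) \<in> borel_measurable lebesgue"
  using measurable_compose[OF lebesgue_measurable_scaling[of t] assms] by (simp add: o_def)

lemma nn_integral_scaleR:
  fixes f :: "'a::euclidean_space \<Rightarrow> ennreal"
  assumes f[measurable]: "f \<in> borel_measurable lebesgue" and t: "t > 0"
  shows "(\<integral>\<^sup>+x. f x \<partial>lebesgue) = ennreal (t ^ DIM('a)) * (\<integral>\<^sup>+x. f (t *\<^sub>R x) \<partial>lebesgue)"
proof -
  have "(\<integral>\<^sup>+x. f x \<partial>lebesgue)
      = (\<integral>\<^sup>+x. f x \<partial>density (distr lebesgue lebesgue (\<lambda>x. t *\<^sub>R x)) (\<lambda>_. ennreal (t ^ DIM('a))))"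
    using lebesgue_eq_density_scaleR[OF t] by metis
  also have "\<dots> = ennreal (t ^ DIM('a)) * integral\<^sup>N (distr lebesgue lebesgue (\<lambda>x. t *\<^sub>R x)) f"
    by (subst nn_integral_density) (auto intro: nn_integral_cmult)
  also have "\<dots> = ennreal (t ^ DIM('a)) * (\<integral>\<^sup>+x. f (t *\<^sub>R x) \<partial>lebesgue)"
    by (subst nn_integral_distr) auto
  finally show ?thesis .
qed

lemma nn_integral_comp_scaleR:
  fixes f :: "'a::euclidean_space \<Rightarrow> ennreal"
  assumes f: "f \<in> borel_measurable lebesgue" and t: "t > 0"
  shows "(\<integral>\<^sup>+x. f (t *\<^sub>R x) \<partial>lebesgue) = ennreal (1 / t ^ DIM('a)) * (\<integral>\<^sup>+x. f x \<partial>lebesgue)"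
proof -
  have "ennreal (1 / t ^ DIM('a)) * ennreal (t ^ DIM('a)) = 1"
    using t by (simp flip: ennreal_mult)
  then show ?thesis
    unfolding nn_integral_scaleR[OF f t] by (simp add: mult.assoc[symmetric])
qed

lemma integrable_comp_scaleR:
  fixes f :: "'a::euclidean_space \<Rightarrow> 'b::{banach, second_countable_topology}"
  assumes f: "integrable lebesgue f" and t: "t > 0"
  shows "integrable lebesgue (\<lambda>x. f (t *\<^sub>R x))"
proof -
  have [measurable]: "f \<in> borel_measurable lebesgue" using f by auto
  have "(\<integral>\<^sup>+x. ennreal (norm (f x)) \<partial>lebesgue) < \<infinity>"
    using f by (simp add: integrable_iff_bounded)
  then have "(\<integral>\<^sup>+x. ennreal (norm (f (t *\<^sub>R x))) \<partial>lebesgue) < \<infinity>"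
    using t by (subst nn_integral_comp_scaleR[where f = "\<lambda>x. ennreal (norm (f x))"])
      (auto simp: ennreal_mult_less_top)
  then show ?thesis
    using measurable_comp_scaleR[of f] by (simp add: integrable_iff_bounded)
qed

lemma integral_comp_scaleR:
  fixes f :: "'a::euclidean_space \<Rightarrow> real"
  assumes t: "t > 0"
  shows "(\<integral>x. f (t *\<^sub>R x) \<partial>lebesgue) = (\<integral>x. f x \<partial>lebesgue) / t ^ DIM('a)"
proof (cases "integrable lebesgue f")
  case True
  then have [measurable]: "f \<in> borel_measurable lebesgue" by auto
  have "(\<integral>x. f x \<partial>lebesgue)
      = (\<integral>x. f x \<partial>density (distr lebesgue lebesgue (\<lambda>x. t *\<^sub>R x)) (\<lambda>_. ennreal (t ^ DIM('a))))"
    using lebesgue_eq_density_scaleR[OF t] by metis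
  also have "\<dots> = (\<integral>x. t ^ DIM('a) * f x \<partial>distr lebesgue lebesgue (\<lambda>x. t *\<^sub>R x))"
    using t by (subst integral_density) auto
  also have "\<dots> = t ^ DIM('a) * (\<integral>x. f (t *\<^sub>R x) \<partial>lebesgue)"
    by (subst integral_distr) auto
  finally show ?thesis using t by simp
next
  case False
  moreover have "\<not> integrable lebesgue (\<lambda>x. f (t *\<^sub>R x))"
    using integrable_comp_scaleR[of "\<lambda>x. f (t *\<^sub>R x)" "1 / t"] t False by auto
  ultimately show ?thesis by (simp add: not_integrable_integral_eq)
qed

lemma pd_eq_derivative:
  assumes "(F has_derivative F') (at x)"
  shows "pd i F x = F' i"
  using frechet_derivative_at[OF assms] by (simp add: pd_def)

lemma
  fixes F :: "'a::euclidean_space \<Rightarrow> real"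
  assumes "F differentiable at (t *\<^sub>R y)"
  shows pd_scaled_comp_scaleR: "pd i (\<lambda>y. k * F (t *\<^sub>R y)) y = k * t * pd i F (t *\<^sub>R y)"
    and differentiable_scaled_comp_scaleR: "(\<lambda>y. k * F (t *\<^sub>R y)) differentiable at y"
proof -
  obtain F' where F': "(F has_derivative F') (at (t *\<^sub>R y))"
    using assms by (auto simp: differentiable_def)
  have "((\<lambda>y::'a. t *\<^sub>R y) has_derivative (\<lambda>h. t *\<^sub>R h)) (at y)"
    by (intro derivative_eq_intros) auto
  from has_derivative_compose[OF this F']
  have d: "((\<lambda>y. k * F (t *\<^sub>R y)) has_derivative (\<lambda>h. k * F' (t *\<^sub>R h))) (at y)"
    by (intro has_derivative_mult_right) simp
  have "F' (t *\<^sub>R i) = t * F' i"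
    using linear_scale[OF has_derivative_linear[OF F']] by simp
  then show "pd i (\<lambda>y. k * F (t *\<^sub>R y)) y = k * t * pd i F (t *\<^sub>R y)"
    using pd_eq_derivative[OF d] pd_eq_derivative[OF F'] by simp
  show "(\<lambda>y. k * F (t *\<^sub>R y)) differentiable at y"
    using d by (auto simp: differentiable_def)
qed

lemma pderivs_comp_scaleR:
  fixes F :: "'a::euclidean_space \<Rightarrow> real"
  assumes "smooth_fun F" and "set is \<subseteq> Basis"
  shows "pderivs is (\<lambda>y. F (t *\<^sub>R y)) = (\<lambda>y. t ^ length is * pderivs is F (t *\<^sub>R y))"
  using assms(2)
proof (induction "is")
  case (Cons i "is")
  have IH: "pderivs is (\<lambda>y. F (t *\<^sub>R y)) = (\<lambda>y. t ^ length is * pderivs is F (t *\<^sub>R y))"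
    using Cons by simp
  have "\<And>x. pderivs is F differentiable at x"
    using assms(1) Cons.prems by (auto simp: smooth_fun_def)
  then show ?case
    by (simp add: IH fun_eq_iff pd_scaled_comp_scaleR)
qed simp

lemma smooth_fun_comp_scaleR:
  fixes F :: "'a::euclidean_space \<Rightarrow> real"
  assumes "smooth_fun F"
  shows "smooth_fun (\<lambda>y. F (t *\<^sub>R y))"
  unfolding smooth_fun_def
proof (intro allI impI)
  fix "is" :: "'a list" and x assume "is": "set is \<subseteq> Basis"
  then have "\<And>x. pderivs is F differentiable at x"
    using assms by (auto simp: smooth_fun_def)
  then show "pderivs is (\<lambda>y. F (t *\<^sub>R y)) differentiable at x"
    unfolding pderivs_comp_scaleR[OF assms "is"] by (rule differentiable_scaled_comp_scaleR)
qed

lemma test_fun_comp_scaleR: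
  fixes F :: "'a::euclidean_space \<Rightarrow> real"
  assumes "test_fun F" and t: "t \<noteq> 0"
  shows "test_fun (\<lambda>y. F (t *\<^sub>R y))"
proof -
  have "{y. F (t *\<^sub>R y) \<noteq> 0} \<subseteq> (\<lambda>x. (1 / t) *\<^sub>R x) ` {x. F x \<noteq> 0}"
    using t by (auto intro!: image_eqI[where x = "t *\<^sub>R _"])
  moreover have "bounded ((\<lambda>x. (1 / t) *\<^sub>R x) ` {x. F x \<noteq> 0})"
    using assms by (intro bounded_scaling) (auto simp: test_fun_def)
  ultimately show ?thesis
    using assms smooth_fun_comp_scaleR by (auto simp: test_fun_def intro: bounded_subset)
qed

lemma smooth_fun_differentiable:
  assumes "smooth_fun \<phi>"
  shows "\<phi> differentiable at x"
  using assms unfolding smooth_fun_def by (metis empty_subsetI list.set(1) pderivs.simps(1))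

lemma smooth_fun_pd_differentiable:
  assumes "smooth_fun \<phi>" and "i \<in> Basis"
  shows "pd i \<phi> differentiable at x"
  using assms unfolding smooth_fun_def
  by (metis empty_subsetI insert_subset list.set(1) list.simps(15) pderivs.simps)

lemma pd_comp_scaleR:
  fixes F :: "'a::euclidean_space \<Rightarrow> real"
  assumes "smooth_fun F"
  shows "pd i (\<lambda>y. F (t *\<^sub>R y)) y = t * pd i F (t *\<^sub>R y)"
  using pd_scaled_comp_scaleR[where k = 1, OF smooth_fun_differentiable[OF assms]] by simp

lemma grad_comp_scaleR:
  fixes F :: "'a::euclidean_space \<Rightarrow> real"
  assumes "smooth_fun F"
  shows "grad (\<lambda>y. F (t *\<^sub>R y)) y = t *\<^sub>R grad F (t *\<^sub>R y)"
  unfolding grad_def pd_comp_scaleR[OF assms] by (simp add: scaleR_sum_right)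

section \<open>Dilations of admissible pairs\<close>

lemma Lp_dilation:
  fixes f :: "'a::euclidean_space \<Rightarrow> 'b::{real_normed_vector, second_countable_topology}"
  assumes "Lp p f" and t: "t > 0"
  shows "Lp p (\<lambda>x. c *\<^sub>R f (t *\<^sub>R x))"
proof -
  have f: "f \<in> borel_measurable lebesgue" "integrable lebesgue (\<lambda>x. norm (f x) powr p)"
    using assms by (auto simp: Lp_def)
  have "integrable lebesgue (\<lambda>x. \<bar>c\<bar> powr p * norm (f (t *\<^sub>R x)) powr p)"
    using integrable_comp_scaleR[OF f(2) t] by simp
  moreover have "(\<lambda>x. c *\<^sub>R f (t *\<^sub>R x)) \<in> borel_measurable lebesgue"
    using measurable_comp_scaleR[OF f(1)] by measurable
  ultimately show ?thesis
    unfolding Lp_def by (simp add: powr_mult)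
qed

lemma Lp_dilation_real:
  fixes f :: "'a::euclidean_space \<Rightarrow> real"
  assumes "Lp p f" and "t > 0"
  shows "Lp p (\<lambda>x. c * f (t *\<^sub>R x))"
  using Lp_dilation[OF assms, of c] by simp

lemma locint_dilation:
  fixes f :: "'a::euclidean_space \<Rightarrow> 'b::{real_normed_vector, second_countable_topology}"
  assumes f: "locint f" and t: "t > 0"
  shows "locint (\<lambda>x. c *\<^sub>R f (t *\<^sub>R x))"
  unfolding locint_def
proof (intro conjI allI impI)
  have "f \<in> borel_measurable lebesgue" using f by (simp add: locint_def)
  then show "(\<lambda>x. c *\<^sub>R f (t *\<^sub>R x)) \<in> borel_measurable lebesgue"
    using measurable_comp_scaleR[of f t] by measurable
  fix K :: "'a set" assume "compact K"
  then have "compact ((\<lambda>y. t *\<^sub>R y) ` K)" by (rule compact_scaling)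
  then have "integrable lebesgue (\<lambda>x. indicator ((\<lambda>y. t *\<^sub>R y) ` K) x * norm (f x))"
    using f by (simp add: locint_def)
  from integrable_comp_scaleR[OF this t]
  have "integrable lebesgue (\<lambda>x. indicator ((\<lambda>y. t *\<^sub>R y) ` K) (t *\<^sub>R x) * norm (f (t *\<^sub>R x)))"
    by simp
  moreover have "t *\<^sub>R x \<in> (\<lambda>y. t *\<^sub>R y) ` K \<longleftrightarrow> x \<in> K" for x
    using t by auto
  ultimately have "integrable lebesgue (\<lambda>x. indicator K x * norm (f (t *\<^sub>R x)))"
    by (simp add: indicator_def)
  then have "integrable lebesgue (\<lambda>x. \<bar>c\<bar> * (indicator K x * norm (f (t *\<^sub>R x))))"
    by (rule integrable_mult_right)
  then show "integrable lebesgue (\<lambda>x. indicator K x * norm (c *\<^sub>R f (t *\<^sub>R x)))"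
    by (simp add: ac_simps)
qed

lemma locint_dilation_real:
  fixes f :: "'a::euclidean_space \<Rightarrow> real"
  assumes "locint f" and "t > 0"
  shows "locint (\<lambda>x. c * f (t *\<^sub>R x))"
  using locint_dilation[OF assms, of c] by simp

lemma weak_grad_dilation:
  fixes m :: "'a::euclidean_space \<Rightarrow> real"
  assumes g: "weak_grad m g" and t: "t > 0"
  shows "weak_grad (\<lambda>x. c * m (t *\<^sub>R x)) (\<lambda>x. (c * t) *\<^sub>R g (t *\<^sub>R x))"
  unfolding weak_grad_def
proof (intro conjI allI impI ballI)
  show "locint (\<lambda>x. c * m (t *\<^sub>R x))"
    using g t by (intro locint_dilation_real) (auto simp: weak_grad_def)
  show "locint (\<lambda>x. (c * t) *\<^sub>R g (t *\<^sub>R x))"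
    using g t by (intro locint_dilation) (auto simp: weak_grad_def)
  fix \<phi> :: "'a \<Rightarrow> real" and i :: 'a assume \<phi>: "test_fun \<phi>" and i: "i \<in> Basis"
  define \<psi> where "\<psi> = (\<lambda>y. \<phi> ((1 / t) *\<^sub>R y))"
  have \<psi>: "test_fun \<psi>" unfolding \<psi>_def using t by (intro test_fun_comp_scaleR[OF \<phi>]) auto
  have \<phi>_eq: "\<phi> = (\<lambda>x. \<psi> (t *\<^sub>R x))" using t by (simp add: \<psi>_def)
  have pd_\<phi>: "pd i \<phi> x = t * pd i \<psi> (t *\<^sub>R x)" for x
    unfolding \<phi>_eq by (rule pd_comp_scaleR) (use \<psi> in \<open>simp add: test_fun_def\<close>)
  have "(\<integral>x. c * m (t *\<^sub>R x) * pd i \<phi> x \<partial>lebesgue)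
      = c * t * (\<integral>x. m (t *\<^sub>R x) * pd i \<psi> (t *\<^sub>R x) \<partial>lebesgue)"
    by (simp add: pd_\<phi> ac_simps)
  also have "\<dots> = c * t * (- (\<integral>x. (g x \<bullet> i) * \<psi> x \<partial>lebesgue) / t ^ DIM('a))"
    using g \<psi> i by (simp add: integral_comp_scaleR[OF t, of "\<lambda>x. m x * pd i \<psi> x"] weak_grad_def)
  also have "\<dots> = - (\<integral>x. c * t * ((g (t *\<^sub>R x) \<bullet> i) * \<psi> (t *\<^sub>R x)) \<partial>lebesgue)"
    using integral_comp_scaleR[OF t, of "\<lambda>x. (g x \<bullet> i) * \<psi> x"] by simp
  also have "\<dots> = - (\<integral>x. ((c * t) *\<^sub>R g (t *\<^sub>R x) \<bullet> i) * \<phi> x \<partial>lebesgue)"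
    by (simp add: \<phi>_eq ac_simps)
  finally show "(\<integral>x. c * m (t *\<^sub>R x) * pd i \<phi> x \<partial>lebesgue)
      = - (\<integral>x. ((c * t) *\<^sub>R g (t *\<^sub>R x) \<bullet> i) * \<phi> x \<partial>lebesgue)" .
qed

lemma integral_inner_grad_dilation:
  fixes g :: "'a::euclidean_space \<Rightarrow> 'a"
  assumes \<phi>: "test_fun \<phi>" and t: "t > 0"
  defines "\<psi> \<equiv> \<lambda>y. \<phi> ((1 / t) *\<^sub>R y)"
  shows "(\<integral>x. (c * t) *\<^sub>R g (t *\<^sub>R x) \<bullet> grad \<phi> x \<partial>lebesgue)
      = c * t * t * (\<integral>x. g x \<bullet> grad \<psi> x \<partial>lebesgue) / t ^ DIM('a)"
    and "test_fun \<psi>"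
proof -
  show \<psi>: "test_fun \<psi>" unfolding \<psi>_def using t by (intro test_fun_comp_scaleR[OF \<phi>]) auto
  have \<phi>_eq: "\<phi> = (\<lambda>x. \<psi> (t *\<^sub>R x))" using t by (simp add: \<psi>_def)
  have "grad \<phi> x = t *\<^sub>R grad \<psi> (t *\<^sub>R x)" for x
    unfolding \<phi>_eq by (rule grad_comp_scaleR) (use \<psi> in \<open>simp add: test_fun_def\<close>)
  then show "(\<integral>x. (c * t) *\<^sub>R g (t *\<^sub>R x) \<bullet> grad \<phi> x \<partial>lebesgue)
      = c * t * t * (\<integral>x. g x \<bullet> grad \<psi> x \<partial>lebesgue) / t ^ DIM('a)"
    by (simp add: integral_comp_scaleR[OF t, of "\<lambda>x. g x \<bullet> grad \<psi> x"] ac_simps)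
qed

lemma Lagr_dilation:
  fixes v :: "'a::euclidean_space"
  assumes c: "c > 0" and t: "t > 0"
  shows "Lagr r (c * a) ((c * t) *\<^sub>R v) = ennreal (c * t powr r) * Lagr r a v"
proof (cases "a > 0")
  case True
  have "c powr r * c powr (1 - r) = c"
    using c by (simp flip: powr_add)
  then have "norm ((c * t) *\<^sub>R v) powr r * (c * a) powr (1 - r)
      = (c * t powr r) * (norm v powr r * a powr (1 - r))"
    using c t True by (simp add: powr_mult abs_of_pos mult_ac)
  then show ?thesis
    using True c t unfolding Lagr_def by (simp add: ennreal_mult)
next
  case False
  then show ?thesis
    using c t unfolding Lagr_def by (auto simp: ennreal_mult_top zero_less_mult_iff)
qed

lemma kin_dilation:
  fixes m :: "'a::euclidean_space \<Rightarrow> real" and w :: "'a \<Rightarrow> 'a"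
  assumes [measurable]: "m \<in> borel_measurable lebesgue" "w \<in> borel_measurable lebesgue"
    and c: "c > 0" and t: "t > 0"
  shows "kin r (\<lambda>x. c * m (t *\<^sub>R x)) (\<lambda>x. (c * t) *\<^sub>R w (t *\<^sub>R x))
       = ennreal (c * t powr r / t ^ DIM('a)) * kin r m w"
proof -
  have L: "(\<lambda>x. Lagr r (m x) (w x)) \<in> borel_measurable lebesgue"
    unfolding Lagr_def by measurable
  have "kin r (\<lambda>x. c * m (t *\<^sub>R x)) (\<lambda>x. (c * t) *\<^sub>R w (t *\<^sub>R x))
      = ennreal (c * t powr r) * (\<integral>\<^sup>+x. Lagr r (m (t *\<^sub>R x)) (w (t *\<^sub>R x)) \<partial>lebesgue)"
    unfolding kin_def Lagr_dilation[OF c t]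
    by (rule nn_integral_cmult) (rule measurable_comp_scaleR[OF L])
  also have "\<dots> = ennreal (c * t powr r / t ^ DIM('a)) * kin r m w"
    unfolding kin_def nn_integral_comp_scaleR[OF L t]
    using c t by (simp add: mult.assoc[symmetric] divide_inverse flip: ennreal_mult)
  finally show ?thesis .
qed

abbreviation potential :: "real \<Rightarrow> ('a::euclidean_space \<Rightarrow> real) \<Rightarrow> ennreal" where
  "potential \<alpha> m \<equiv> \<integral>\<^sup>+x. ennreal (m x powr (\<alpha> + 1)) \<partial>lebesgue"

lemma potential_dilation:
  fixes m :: "'a::euclidean_space \<Rightarrow> real"
  assumes [measurable]: "m \<in> borel_measurable lebesgue" and nonneg: "\<And>x. m x \<ge> 0"
    and c: "c > 0" and t: "t > 0"
  shows "potential \<alpha> (\<lambda>x. c * m (t *\<^sub>R x))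
       = ennreal (c powr (\<alpha> + 1) / t ^ DIM('a)) * potential \<alpha> m"
proof -
  have L: "(\<lambda>x. ennreal (m x powr (\<alpha> + 1))) \<in> borel_measurable lebesgue" by measurable
  have "potential \<alpha> (\<lambda>x. c * m (t *\<^sub>R x))
      = ennreal (c powr (\<alpha> + 1)) * (\<integral>\<^sup>+x. ennreal (m (t *\<^sub>R x) powr (\<alpha> + 1)) \<partial>lebesgue)"
    using c nonneg
    by (simp add: powr_mult ennreal_mult nn_integral_cmult measurable_comp_scaleR[OF L])
  also have "\<dots> = ennreal (c powr (\<alpha> + 1) / t ^ DIM('a)) * potential \<alpha> m"
    unfolding nn_integral_comp_scaleR[OF L t]
    using c t by (simp add: mult.assoc[symmetric] divide_inverse flip: ennreal_mult)
  finally show ?thesis .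
qed

lemma not_AE_zero_dilation:
  fixes m :: "'a::euclidean_space \<Rightarrow> real"
  assumes [measurable]: "m \<in> borel_measurable lebesgue" and nonneg: "\<And>x. m x \<ge> 0"
    and c: "c > 0" and t: "t > 0" and m: "\<not> (AE x in lebesgue. m x = 0)"
  shows "\<not> (AE x in lebesgue. c * m (t *\<^sub>R x) = 0)"
proof
  assume "AE x in lebesgue. c * m (t *\<^sub>R x) = 0"
  then have "AE x in lebesgue. ennreal (m (t *\<^sub>R x)) = 0"
    by eventually_elim (use c in auto)
  moreover have L: "(\<lambda>x. ennreal (m x)) \<in> borel_measurable lebesgue" by measurable
  ultimately have "(\<integral>\<^sup>+x. ennreal (m (t *\<^sub>R x)) \<partial>lebesgue) = 0"
    using nn_integral_0_iff_AE[OF measurable_comp_scaleR[OF L]] by simp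
  then have "AE x in lebesgue. ennreal (m x) = 0"
    using nn_integral_0_iff_AE[OF L] nn_integral_scaleR[OF L t] by simp
  then have "AE x in lebesgue. m x = 0"
    using nonneg by (auto elim!: AE_mp intro!: AE_I2 simp: antisym)
  with m show False by simp
qed

lemma integrable_moment_dilation:
  fixes m :: "'a::euclidean_space \<Rightarrow> real"
  assumes "integrable lebesgue (\<lambda>x. norm x powr b * m x)" and t: "t > 0"
  shows "integrable lebesgue (\<lambda>x. norm x powr b * (c * m (t *\<^sub>R x)))"
proof -
  have "integrable lebesgue (\<lambda>x. (c * t powr (- b)) * (norm (t *\<^sub>R x) powr b * m (t *\<^sub>R x)))"
    using integrable_comp_scaleR[OF assms] by simp
  moreover have "(\<lambda>x. (c * t powr (- b)) * (norm (t *\<^sub>R x) powr b * m (t *\<^sub>R x)))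
      = (\<lambda>x. norm x powr b * (c * m (t *\<^sub>R x)))"
  proof
    fix x :: 'a
    have "norm (t *\<^sub>R x) powr b = t powr b * norm x powr b" using t by (simp add: powr_mult)
    moreover have "t powr (- b) * t powr b = 1" using t by (simp flip: powr_add)
    ultimately show "(c * t powr (- b)) * (norm (t *\<^sub>R x) powr b * m (t *\<^sub>R x))
        = norm x powr b * (c * m (t *\<^sub>R x))"
      by (simp add: algebra_simps)
  qed
  ultimately show ?thesis by metis
qed

lemma admissible_measurable:
  assumes "admissible r q0 b m w"
  shows "m \<in> borel_measurable lebesgue" "w \<in> borel_measurable lebesgue" "\<And>x. m x \<ge> 0"
  using assms by (auto simp: admissible_def Lp_def)

lemma admissible_dilation:
  fixes m :: "'a::euclidean_space \<Rightarrow> real" and w :: "'a \<Rightarrow> 'a"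
  assumes adm: "admissible r q0 b m w" and c: "c > 0" and t: "t > 0"
  shows "admissible r q0 b (\<lambda>x. c * m (t *\<^sub>R x)) (\<lambda>x. (c * t) *\<^sub>R w (t *\<^sub>R x))"
proof -
  let ?q = "qhat DIM('a) r q0"
  from adm have m: "Lp 1 m" "Lp 1 w" "integrable lebesgue (\<lambda>x. norm x powr b * m x)"
    "\<not> (AE x in lebesgue. m x = 0)"
    by (auto simp: admissible_def)
  from adm obtain g where g: "weak_grad m g" "Lp ?q g"
    "\<And>\<phi>. test_fun \<phi> \<Longrightarrow> (\<integral>x. g x \<bullet> grad \<phi> x \<partial>lebesgue) = (\<integral>x. w x \<bullet> grad \<phi> x \<partial>lebesgue)"
    unfolding admissible_def by blast
  from adm obtain g2 where g2: "weak_grad m g2" "Lp ?q g2" and "Lp ?q m"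
    by (auto simp: admissible_def W1p_def)
  then have "W1p ?q (\<lambda>x. c * m (t *\<^sub>R x))"
    unfolding W1p_def using Lp_dilation_real weak_grad_dilation Lp_dilation t by blast
  moreover have "(\<integral>x. (c * t) *\<^sub>R g (t *\<^sub>R x) \<bullet> grad \<phi> x \<partial>lebesgue)
      = (\<integral>x. (c * t) *\<^sub>R w (t *\<^sub>R x) \<bullet> grad \<phi> x \<partial>lebesgue)" if "test_fun \<phi>" for \<phi>
    unfolding integral_inner_grad_dilation(1)[OF that t]
    using g(3)[OF integral_inner_grad_dilation(2)[OF that t]] by simp
  ultimately show ?thesis
    unfolding admissible_def
  proof (intro conjI exI[of _ "\<lambda>x. (c * t) *\<^sub>R g (t *\<^sub>R x)"] allI impI)
    show "Lp 1 (\<lambda>x. c * m (t *\<^sub>R x))" "Lp 1 (\<lambda>x. (c * t) *\<^sub>R w (t *\<^sub>R x))"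
      using Lp_dilation_real[OF m(1) t] Lp_dilation[OF m(2) t] .
    show "integrable lebesgue (\<lambda>x. norm x powr b * (c * m (t *\<^sub>R x)))"
      using integrable_moment_dilation[OF m(3) t] .
    show "weak_grad (\<lambda>x. c * m (t *\<^sub>R x)) (\<lambda>x. (c * t) *\<^sub>R g (t *\<^sub>R x))"
      "Lp ?q (\<lambda>x. (c * t) *\<^sub>R g (t *\<^sub>R x))"
      using weak_grad_dilation[OF g(1) t] Lp_dilation[OF g(2) t] .
    show "0 \<le> c * m (t *\<^sub>R x)" for x
      using admissible_measurable(3)[OF adm] c by simp
    show "\<not> (AE x in lebesgue. c * m (t *\<^sub>R x) = 0)"
      using not_AE_zero_dilation[OF admissible_measurable(1,3)[OF adm] c t m(4)] .
  qed
qed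

lemma borel_measurable_lebesgue_continuous:
  fixes f :: "'a::euclidean_space \<Rightarrow> 'b::{second_countable_topology, topological_space}"
  assumes "continuous_on UNIV f"
  shows "f \<in> borel_measurable lebesgue"
  by (rule measurable_completion) (simp add: borel_measurable_continuous_onI[OF assms])

lemma integrable_bounded_support:
  fixes f :: "'a::euclidean_space \<Rightarrow> 'b::{banach, second_countable_topology}"
  assumes f: "f \<in> borel_measurable lebesgue" and bound: "\<And>x. norm (f x) \<le> C"
    and supp: "\<And>x. norm x > R \<Longrightarrow> f x = 0"
  shows "integrable lebesgue f"
proof (rule Bochner_Integration.integrable_bound[OF _ f])
  have "cball (0::'a) R \<in> lmeasurable" by simp
  then show "integrable lebesgue (\<lambda>x::'a. C * indicator (cball 0 R) x)"
    by (simp add: integrable_indicator_iff fmeasurable_def)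
  have "C \<ge> 0" using bound norm_ge_zero order_trans by blast
  then show "AE x in lebesgue. norm (f x) \<le> norm (C * indicator (cball 0 R) x)"
    using bound supp by (intro AE_I2) (auto simp: indicator_def not_le)
qed

lemma integrable_continuous_support:
  fixes f :: "'a::euclidean_space \<Rightarrow> real"
  assumes f: "continuous_on UNIV f" and supp: "\<And>x. norm x > R \<Longrightarrow> f x = 0"
  shows "integrable lebesgue f"
proof -
  have "compact (f ` cball 0 R)"
    by (rule compact_continuous_image[OF continuous_on_subset[OF f]]) auto
  then obtain C where "\<forall>y\<in>f ` cball 0 R. norm y \<le> C"
    using compact_imp_bounded[of "f ` cball 0 R"] unfolding bounded_iff by blast
  then have "norm (f x) \<le> max 0 C" for x
    using supp[of x] by (cases "norm x \<le> R") (auto simp: not_le le_max_iff_disj)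
  then show ?thesis
    using borel_measurable_lebesgue_continuous[OF f] supp by (intro integrable_bounded_support)
qed

lemma Lp_bounded_support:
  fixes f :: "'a::euclidean_space \<Rightarrow> 'b::{real_normed_vector, second_countable_topology}"
  assumes f[measurable]: "f \<in> borel_measurable lebesgue" and bound: "\<And>x. norm (f x) \<le> C"
    and supp: "\<And>x. norm x > R \<Longrightarrow> f x = 0" and p: "p > 0"
  shows "Lp p f"
  unfolding Lp_def
proof
  show "integrable lebesgue (\<lambda>x. norm (f x) powr p)"
  proof (rule integrable_bounded_support)
    show "(\<lambda>x. norm (f x) powr p) \<in> borel_measurable lebesgue" by measurable
    show "norm (norm (f x) powr p) \<le> C powr p" for x
      using bound[of x] p by (simp add: powr_mono2)
    show "norm (f x) powr p = 0" if "norm x > R" for x using supp[OF that] by simp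
  qed
qed (rule f)

lemma locint_continuous:
  fixes f :: "'a::euclidean_space \<Rightarrow> 'b::{real_normed_vector, second_countable_topology}"
  assumes f: "continuous_on UNIV f"
  shows "locint f"
  unfolding locint_def
proof (intro conjI allI impI)
  show f_meas[measurable]: "f \<in> borel_measurable lebesgue"
    by (rule borel_measurable_lebesgue_continuous[OF f])
  fix K :: "'a set" assume K: "compact K"
  then have [measurable]: "K \<in> sets lebesgue" using lmeasurable_compact fmeasurableD by blast
  obtain R where R: "\<forall>x\<in>K. norm x \<le> R"
    using compact_imp_bounded[OF K] unfolding bounded_iff by blast
  have "compact (f ` K)"
    by (rule compact_continuous_image[OF continuous_on_subset[OF f]]) (use K in auto)
  then obtain C where "\<forall>y\<in>f ` K. norm y \<le> C"
    using compact_imp_bounded[of "f ` K"] unfolding bounded_iff by blast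
  then have C: "norm (indicator K x * norm (f x)) \<le> max 0 C" for x
    by (cases "x \<in> K") auto
  show "integrable lebesgue (\<lambda>x. indicator K x * norm (f x))"
  proof (rule integrable_bounded_support[OF _ C])
    show "indicator K x * norm (f x) = 0" if "norm x > R" for x
      using R that by (auto simp: indicator_def)
  qed measurable
qed

section \<open>Integration by parts\<close>

lemma integral_translate:
  fixes f :: "'a::euclidean_space \<Rightarrow> real"
  assumes f: "f \<in> borel_measurable lebesgue"
  shows "(\<integral>x. f (x + v) \<partial>lebesgue) = (\<integral>x. f x \<partial>lebesgue)"
proof -
  have eq: "(\<lambda>x::'a. v + (\<Sum>j\<in>Basis. (1 * (x \<bullet> j)) *\<^sub>R j)) = (\<lambda>x. x + v)"
    unfolding mult_1 euclidean_representation by (simp add: add.commute)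
  have "(lebesgue :: 'a measure) = density (distr lebesgue lebesgue
      (\<lambda>x::'a. v + (\<Sum>j\<in>Basis. (1 * (x \<bullet> j)) *\<^sub>R j))) (\<lambda>_. ennreal (\<Prod>j\<in>(Basis::'a set). \<bar>1::real\<bar>))"
    by (rule lebesgue_affine_euclidean) auto
  then have L: "lebesgue = distr lebesgue lebesgue (\<lambda>x::'a. x + v)"
    unfolding eq by (simp add: density_1)
  have "(\<lambda>x::'a. x + v) \<in> lebesgue \<rightarrow>\<^sub>M lebesgue"
    using lebesgue_affine_measurable[of "\<lambda>_::'a. 1" v] eq by simp
  then have "(\<integral>x. f x \<partial>distr lebesgue lebesgue (\<lambda>x. x + v)) = (\<integral>x. f (x + v) \<partial>lebesgue)"
    by (rule integral_distr[OF _ f])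
  then show ?thesis
    using L by metis
qed

lemma has_real_derivative_along_line:
  fixes F :: "'a::euclidean_space \<Rightarrow> real"
  assumes F: "\<And>x. (F has_derivative F' x) (at x)"
  shows "((\<lambda>t. F (x + t *\<^sub>R i)) has_real_derivative F' (x + t *\<^sub>R i) i) (at t)"
proof -
  have "((\<lambda>t. x + t *\<^sub>R i) has_derivative (\<lambda>h. h *\<^sub>R i)) (at t)"
    by (intro derivative_eq_intros) auto
  from has_derivative_compose[OF this F]
  have "((\<lambda>t. F (x + t *\<^sub>R i)) has_derivative (\<lambda>h. F' (x + t *\<^sub>R i) (h *\<^sub>R i))) (at t)" .
  moreover have "F' (x + t *\<^sub>R i) (h *\<^sub>R i) = F' (x + t *\<^sub>R i) i * h" for h
    using linear_scale[OF has_derivative_linear[OF F]] by simp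
  ultimately show ?thesis by (simp add: has_field_derivative_def)
qed

text \<open>Difference quotients of a compactly supported \<open>C\<^sup>1\<close> function have integral \<open>0\<close>
  (translation invariance) and a common integrable majorant (mean value theorem); dominated
  convergence then gives \<open>\<integral> \<partial>\<^sub>i F = 0\<close>.\<close>

lemma integral_difference_quotient_eq_0:
  fixes F :: "'a::euclidean_space \<Rightarrow> real"
  assumes F: "continuous_on UNIV F" and supp: "\<And>x. norm x > R \<Longrightarrow> F x = 0"
    and i: "norm i = 1" and h: "0 < h" "h \<le> 1"
  shows "(\<integral>x. (F (x + h *\<^sub>R i) - F x) / h \<partial>lebesgue) = 0"
proof -
  have "integrable lebesgue (\<lambda>x. F (x + h *\<^sub>R i))"
  proof (rule integrable_continuous_support)
    show "continuous_on UNIV (\<lambda>x. F (x + h *\<^sub>R i))"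
      by (intro continuous_on_compose2[OF F]) (auto intro!: continuous_intros)
    fix x :: 'a assume "norm x > R + 1"
    moreover have "norm (x + h *\<^sub>R i) \<ge> norm x - h"
      using norm_triangle_ineq2[of x "- (h *\<^sub>R i)"] i h by simp
    ultimately show "F (x + h *\<^sub>R i) = 0" using h by (intro supp) linarith
  qed
  moreover have "(\<integral>x. F (x + h *\<^sub>R i) \<partial>lebesgue) = (\<integral>x. F x \<partial>lebesgue)"
    by (rule integral_translate[OF borel_measurable_lebesgue_continuous[OF F]])
  ultimately show ?thesis
    using integrable_continuous_support[OF F supp] by simp
qed

lemma difference_quotient_majorant:
  fixes F :: "'a::euclidean_space \<Rightarrow> real"
  assumes F: "\<And>x. (F has_derivative F' x) (at x)" and F': "continuous_on UNIV (\<lambda>x. F' x i)"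
    and supp: "\<And>x. norm x > R \<Longrightarrow> F x = 0" and i: "norm i = 1"
  obtains B where "\<And>h x. 0 < h \<Longrightarrow> h \<le> 1 \<Longrightarrow>
    \<bar>(F (x + h *\<^sub>R i) - F x) / h\<bar> \<le> B * indicator (cball 0 (R + 1)) x"
proof -
  have "compact ((\<lambda>x. F' x i) ` cball 0 (R + 2))"
    by (rule compact_continuous_image[OF continuous_on_subset[OF F']]) auto
  then obtain B where "\<forall>y\<in>cball 0 (R + 2). \<bar>F' y i\<bar> \<le> B"
    using compact_imp_bounded[of "(\<lambda>x. F' x i) ` cball 0 (R + 2)"] unfolding bounded_iff by auto
  then have B: "\<And>y. y \<in> cball 0 (R + 2) \<Longrightarrow> \<bar>F' y i\<bar> \<le> B" by blast
  show ?thesis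
  proof (rule that)
    fix h :: real and x :: 'a assume h: "0 < h" "h \<le> 1"
    have shift: "norm (x + h *\<^sub>R i) \<ge> norm x - h"
      using norm_triangle_ineq2[of x "- (h *\<^sub>R i)"] i h by simp
    show "\<bar>(F (x + h *\<^sub>R i) - F x) / h\<bar> \<le> B * indicator (cball 0 (R + 1)) x"
    proof (cases "x \<in> cball 0 (R + 1)")
      case False
      then have "F (x + h *\<^sub>R i) = 0" "F x = 0"
        using shift h by (auto intro!: supp)
      then show ?thesis using False by simp
    next
      case True
      obtain z where z: "0 < z" "z < h"
        "F (x + h *\<^sub>R i) - F (x + 0 *\<^sub>R i) = (h - 0) * F' (x + z *\<^sub>R i) i"
        using MVT2[OF h(1) has_real_derivative_along_line[OF F]] by blast
      have "norm (x + z *\<^sub>R i) \<le> norm x + z"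
        using norm_triangle_ineq[of x "z *\<^sub>R i"] i z by simp
      then have "\<bar>F' (x + z *\<^sub>R i) i\<bar> \<le> B"
        using True z h by (intro B) simp
      then show ?thesis using True z h by simp
    qed
  qed
qed

lemma difference_quotient_tendsto:
  fixes F :: "'a::euclidean_space \<Rightarrow> real"
  assumes F: "\<And>x. (F has_derivative F' x) (at x)" and h: "filterlim h (at 0) sequentially"
  shows "(\<lambda>j. (F (x + h j *\<^sub>R i) - F x) / h j) \<longlonglongrightarrow> F' x i"
proof -
  have "((\<lambda>y. (F (x + y *\<^sub>R i) - F (x + 0 *\<^sub>R i)) / (y - 0)) \<longlongrightarrow> F' (x + 0 *\<^sub>R i) i) (at 0)"
    using has_real_derivative_along_line[OF F, of x i 0] by (simp only: has_field_derivative_iff)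
  from filterlim_compose[OF this[simplified] h] show ?thesis by simp
qed

lemma integral_partial_derivative_eq_0:
  fixes F :: "'a::euclidean_space \<Rightarrow> real"
  assumes F: "\<And>x. (F has_derivative F' x) (at x)" and F': "continuous_on UNIV (\<lambda>x. F' x i)"
    and supp: "\<And>x. norm x > R \<Longrightarrow> F x = 0" and i: "norm i = 1"
  shows "(\<integral>x. F' x i \<partial>lebesgue) = 0"
proof -
  obtain B where B: "\<And>h x. 0 < h \<Longrightarrow> h \<le> 1 \<Longrightarrow>
      \<bar>(F (x + h *\<^sub>R i) - F x) / h\<bar> \<le> B * indicator (cball 0 (R + 1)) x"
    using difference_quotient_majorant[OF F F' supp i] by blast
  define h :: "nat \<Rightarrow> real" where "h j = 1 / Suc j" for j
  have h: "0 < h j" "h j \<le> 1" for j by (auto simp: h_def)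
  have h_lim: "filterlim h (at 0) sequentially"
    unfolding h_def filterlim_at
    using LIMSEQ_inverse_real_of_nat by (auto simp: divide_inverse)
  have Fc: "continuous_on UNIV F"
    using F by (intro continuous_at_imp_continuous_on ballI has_derivative_continuous) auto
  then have [measurable]: "F \<in> borel_measurable lebesgue"
    by (rule borel_measurable_lebesgue_continuous)
  have shift_measurable: "(\<lambda>x. F (x + v)) \<in> borel_measurable lebesgue" for v
    by (intro borel_measurable_lebesgue_continuous continuous_on_compose2[OF Fc])
      (auto intro!: continuous_intros)
  have "(\<lambda>j. \<integral>x. (F (x + h j *\<^sub>R i) - F x) / h j \<partial>lebesgue) \<longlonglongrightarrow> (\<integral>x. F' x i \<partial>lebesgue)"
  proof (rule integral_dominated_convergence)
    have "emeasure lebesgue (cball (0::'a) (R + 1)) < \<infinity>"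
      using emeasure_bounded_finite[of "cball (0::'a) (R + 1)"] by simp
    then show "integrable lebesgue (\<lambda>x::'a. B * indicator (cball 0 (R + 1)) x)"
      by (simp add: integrable_indicator_iff)
    show "AE x in lebesgue. norm ((F (x + h j *\<^sub>R i) - F x) / h j)
        \<le> B * indicator (cball 0 (R + 1)) x" for j
      using B[OF h] by (intro AE_I2) (simp only: real_norm_def)
    show "AE x in lebesgue. (\<lambda>j. (F (x + h j *\<^sub>R i) - F x) / h j) \<longlonglongrightarrow> F' x i"
      using difference_quotient_tendsto[OF F h_lim] by simp
    show "(\<lambda>x. (F (x + h j *\<^sub>R i) - F x) / h j) \<in> borel_measurable lebesgue" for j
      using shift_measurable[of "h j *\<^sub>R i"] by measurable
  qed (rule borel_measurable_lebesgue_continuous[OF F'])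
  moreover have "(\<integral>x. (F (x + h j *\<^sub>R i) - F x) / h j \<partial>lebesgue) = 0" for j
    by (rule integral_difference_quotient_eq_0[OF Fc supp i h])
  ultimately have "(\<lambda>j. 0::real) \<longlonglongrightarrow> (\<integral>x. F' x i \<partial>lebesgue)"
    by (simp only:)
  then show ?thesis
    using LIMSEQ_unique[OF tendsto_const] by metis
qed

lemma pd_eq_0_outside_support:
  assumes "\<And>y. norm y > R \<Longrightarrow> \<phi> y = 0" and "norm x > R"
  shows "pd i \<phi> x = 0"
proof -
  have "((\<lambda>_. 0) has_derivative (\<lambda>_. 0)) (at x)" by simp
  then have "(\<phi> has_derivative (\<lambda>_. 0)) (at x)"
    by (rule has_derivative_transform_within_open[where s = "- cball 0 R"])
      (use assms in \<open>auto simp: not_le\<close>)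
  then show ?thesis by (rule pd_eq_derivative)
qed

lemma weak_grad_classical:
  fixes f :: "'a::euclidean_space \<Rightarrow> real"
  assumes f: "\<And>x. (f has_derivative (\<lambda>v. g x \<bullet> v)) (at x)" and g: "continuous_on UNIV g"
  shows "weak_grad f g"
  unfolding weak_grad_def
proof (intro conjI allI impI ballI)
  have f_cont: "continuous_on UNIV f"
    using f by (intro continuous_at_imp_continuous_on ballI has_derivative_continuous) auto
  show "locint f" "locint g" using locint_continuous f_cont g by auto
  fix \<phi> :: "'a \<Rightarrow> real" and i :: 'a assume \<phi>: "test_fun \<phi>" and i: "i \<in> Basis"
  have \<phi>_diff: "\<phi> differentiable at x" "pd i \<phi> differentiable at x" for x
    using \<phi> i smooth_fun_differentiable smooth_fun_pd_differentiable by (auto simp: test_fun_def)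
  have \<phi>_cont: "continuous_on UNIV \<phi>" "continuous_on UNIV (pd i \<phi>)"
    using \<phi>_diff
    by (auto intro!: continuous_at_imp_continuous_on differentiable_imp_continuous_within)
  obtain R where \<phi>_supp: "\<And>x. norm x > R \<Longrightarrow> \<phi> x = 0"
    using \<phi> unfolding test_fun_def bounded_iff by (metis (mono_tags) mem_Collect_eq not_le)
  define F' where "F' x v = f x * frechet_derivative \<phi> (at x) v + (g x \<bullet> v) * \<phi> x" for x v
  have "((\<lambda>x. f x * \<phi> x) has_derivative F' x) (at x)" for x
    using has_derivative_mult[OF f frechet_derivative_works[THEN iffD1, OF \<phi>_diff(1)]]
    by (simp add: F'_def[abs_def] mult_ac)
  moreover have F'_i: "F' x i = f x * pd i \<phi> x + (g x \<bullet> i) * \<phi> x" for x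
    by (simp add: F'_def pd_def)
  have cont1: "continuous_on UNIV (\<lambda>x. f x * pd i \<phi> x)"
    by (intro continuous_intros f_cont \<phi>_cont)
  have cont2: "continuous_on UNIV (\<lambda>x. (g x \<bullet> i) * \<phi> x)"
    by (intro continuous_intros g \<phi>_cont)
  have "continuous_on UNIV (\<lambda>x. F' x i)"
    unfolding F'_i by (intro continuous_intros cont1 cont2)
  ultimately have "(\<integral>x. F' x i \<partial>lebesgue) = 0"
    by (rule integral_partial_derivative_eq_0) (use \<phi>_supp i in auto)
  moreover have "integrable lebesgue (\<lambda>x. f x * pd i \<phi> x)"
  proof (rule integrable_continuous_support[OF cont1])
    show "f x * pd i \<phi> x = 0" if "norm x > R" for x
      using pd_eq_0_outside_support[of R \<phi> x i] \<phi>_supp that by simp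
  qed
  moreover have "integrable lebesgue (\<lambda>x. (g x \<bullet> i) * \<phi> x)"
    by (rule integrable_continuous_support[OF cont2, of R]) (simp add: \<phi>_supp)
  ultimately show "(\<integral>x. f x * pd i \<phi> x \<partial>lebesgue) = - (\<integral>x. (g x \<bullet> i) * \<phi> x \<partial>lebesgue)"
    by (simp add: F'_i)
qed

section \<open>An admissible pair with finite kinetic energy\<close>

definition bump_profile :: "nat \<Rightarrow> real \<Rightarrow> real" where
  "bump_profile k s = (max 0 (1 - s)) ^ k"

definition bump_profile_deriv :: "nat \<Rightarrow> real \<Rightarrow> real" where
  "bump_profile_deriv k s = - (real k * (max 0 (1 - s)) ^ (k - 1))"

lemma bump_profile_has_real_derivative:
  assumes k: "k \<ge> 2"
  shows "(bump_profile k has_real_derivative bump_profile_deriv k s) (at s)"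
proof -
  consider "s < 1" | "s > 1" | "s = 1" by linarith
  then show ?thesis
  proof cases
    case 1
    have "((\<lambda>s. (1 - s) ^ k) has_real_derivative bump_profile_deriv k s) (at s)"
      by (rule derivative_eq_intros refl | use 1 in \<open>simp add: bump_profile_deriv_def\<close>)+
    then show ?thesis
      by (rule has_field_derivative_transform_within_open[of _ _ _ "{..<1}"])
        (use 1 in \<open>auto simp: bump_profile_def\<close>)
  next
    case 2
    then have "bump_profile_deriv k s = 0" using k by (simp add: bump_profile_deriv_def)
    then have "((\<lambda>s. 0) has_real_derivative bump_profile_deriv k s) (at s)" by simp
    then show ?thesis
      by (rule has_field_derivative_transform_within_open[of _ _ _ "{1<..}"])
        (use 2 k in \<open>auto simp: bump_profile_def\<close>)
  next
    case 3
    have at_1: "bump_profile_deriv k 1 = 0" "bump_profile k 1 = 0"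
      using k by (auto simp: bump_profile_deriv_def bump_profile_def)
    have bound: "norm ((bump_profile k y - bump_profile k 1) / (y - 1)) \<le> \<bar>y - 1\<bar> ^ (k - 1)" for y
    proof (cases "y = 1")
      case True then show ?thesis by simp
    next
      case False
      have m: "max 0 (1 - y) \<le> \<bar>y - 1\<bar>" by simp
      have "\<bar>bump_profile k y\<bar> \<le> \<bar>y - 1\<bar> ^ k"
        unfolding bump_profile_def using m by (simp add: power_mono)
      moreover have "\<bar>y - 1\<bar> ^ k = \<bar>y - 1\<bar> * \<bar>y - 1\<bar> ^ (k - 1)"
        using k by (metis Suc_diff_1 less_le_trans pos2 power_Suc zero_less_Suc)
      ultimately have "\<bar>bump_profile k y\<bar> \<le> \<bar>y - 1\<bar> * \<bar>y - 1\<bar> ^ (k - 1)" by simp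
      then show ?thesis using False at_1 by (simp add: abs_divide divide_le_eq mult.commute)
    qed
    have "((\<lambda>y. \<bar>y - 1\<bar> ^ (k - 1)) \<longlongrightarrow> \<bar>1 - 1\<bar> ^ (k - 1)) (at (1::real))"
      by (intro tendsto_intros)
    moreover have zero: "\<bar>1 - 1\<bar> ^ (k - 1) = (0::real)" using k by simp
    ultimately have "((\<lambda>y. \<bar>y - 1\<bar> ^ (k - 1)) \<longlongrightarrow> 0) (at (1::real))" by (simp only: zero)
    with always_eventually[OF allI[OF bound]]
    have "((\<lambda>y. (bump_profile k y - bump_profile k 1) / (y - 1)) \<longlongrightarrow> 0) (at 1)"
      by (rule Lim_null_comparison)
    then show ?thesis unfolding 3 has_field_derivative_iff using at_1 by simp
  qed
qed

definition bump :: "nat \<Rightarrow> 'a::euclidean_space \<Rightarrow> real" where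
  "bump k x = bump_profile k (x \<bullet> x)"

definition bump_grad :: "nat \<Rightarrow> 'a::euclidean_space \<Rightarrow> 'a" where
  "bump_grad k x = (2 * bump_profile_deriv k (x \<bullet> x)) *\<^sub>R x"

lemma bump_has_derivative:
  assumes k: "k \<ge> 2"
  shows "(bump k has_derivative (\<lambda>v. bump_grad k x \<bullet> v)) (at x)"
proof -
  have inner: "((\<lambda>x::'a. x \<bullet> x) has_derivative (\<lambda>v. x \<bullet> v + v \<bullet> x)) (at x)"
    by (rule derivative_eq_intros refl)+
  have hd: "(bump_profile k has_derivative (\<lambda>t. bump_profile_deriv k (x \<bullet> x) * t)) (at (x \<bullet> x))"
    using bump_profile_has_real_derivative[OF k, of "x \<bullet> x"] by (simp add: has_field_derivative_def)
  have "((\<lambda>x. bump_profile k (x \<bullet> x)) has_derivative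
      (\<lambda>v. bump_profile_deriv k (x \<bullet> x) * (x \<bullet> v + v \<bullet> x))) (at x)"
    using has_derivative_compose[OF inner hd] by simp
  moreover have "(\<lambda>v. bump_profile_deriv k (x \<bullet> x) * (x \<bullet> v + v \<bullet> x)) = (\<lambda>v. bump_grad k x \<bullet> v)"
    by (simp add: fun_eq_iff bump_grad_def inner_commute algebra_simps)
  ultimately show ?thesis by (simp add: bump_def[abs_def])
qed

lemma continuous_on_bump: "continuous_on UNIV (bump k :: 'a::euclidean_space \<Rightarrow> real)"
  unfolding bump_def[abs_def] bump_profile_def by (intro continuous_intros)

lemma continuous_on_bump_grad: "continuous_on UNIV (bump_grad k :: 'a::euclidean_space \<Rightarrow> 'a)"
  unfolding bump_grad_def[abs_def] bump_profile_deriv_def by (intro continuous_intros)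

lemma bump_eq_0: "k \<ge> 1 \<Longrightarrow> norm x \<ge> 1 \<Longrightarrow> bump k x = 0"
proof -
  assume "k \<ge> 1" "norm x \<ge> 1"
  moreover have "x \<bullet> x = norm x ^ 2" by (simp add: power2_norm_eq_inner)
  moreover have "norm x ^ 2 \<ge> 1" using \<open>norm x \<ge> 1\<close> by (simp add: one_le_power)
  ultimately show "bump k x = 0" by (simp add: bump_def bump_profile_def)
qed

lemma bump_grad_eq_0: "k \<ge> 2 \<Longrightarrow> norm x \<ge> 1 \<Longrightarrow> bump_grad k x = 0"
proof -
  assume "k \<ge> 2" "norm x \<ge> 1"
  moreover have "x \<bullet> x = norm x ^ 2" by (simp add: power2_norm_eq_inner)
  moreover have "norm x ^ 2 \<ge> 1" using \<open>norm x \<ge> 1\<close> by (simp add: one_le_power)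
  ultimately show "bump_grad k x = 0" by (simp add: bump_grad_def bump_profile_deriv_def)
qed

lemma bump_bounds: "0 \<le> bump k x" "bump k x \<le> 1"
proof -
  have "0 \<le> x \<bullet> x" by simp
  then have "0 \<le> max 0 (1 - x \<bullet> x)" "max 0 (1 - x \<bullet> x) \<le> 1" by auto
  then show "0 \<le> bump k x" "bump k x \<le> 1" by (auto simp: bump_def bump_profile_def power_le_one)
qed

lemma bump_pos: "norm x < 1 \<Longrightarrow> bump k x > 0"
proof -
  assume "norm x < 1"
  moreover have "x \<bullet> x = norm x ^ 2" by (simp add: power2_norm_eq_inner)
  moreover have "norm x ^ 2 < 1" using \<open>norm x < 1\<close> by (simp add: power_less_one_iff abs_less_iff)
  ultimately show "bump k x > 0" by (simp add: bump_def bump_profile_def)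
qed

lemma norm_bump_grad_le: "k \<ge> 2 \<Longrightarrow> norm (bump_grad k x) \<le> 2 * real k"
proof (cases "norm x \<le> 1")
  case True
  have "x \<bullet> x = norm x ^ 2" by (simp add: power2_norm_eq_inner)
  then have a: "0 \<le> max 0 (1 - x \<bullet> x)" "max 0 (1 - x \<bullet> x) \<le> 1" by auto
  have "norm (bump_grad k x) = 2 * real k * max 0 (1 - x \<bullet> x) ^ (k - 1) * norm x"
    by (simp add: bump_grad_def bump_profile_deriv_def abs_mult)
  also have "\<dots> \<le> 2 * real k * 1 * 1"
    using a True by (intro mult_mono power_le_one) auto
  finally show ?thesis by simp
next
  case False
  assume "k \<ge> 2"
  then have "bump_grad k x = 0" using bump_grad_eq_0[of k x] False by simp
  then show ?thesis by simp
qed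

lemma Lagr_bump_le:
  assumes k: "k \<ge> 2" and kr: "real k \<ge> r" and r: "r > 1"
  shows "Lagr r (bump k x) (bump_grad k x)
    \<le> ennreal ((2 * real k) powr r) * indicator (cball 0 1) x"
proof (cases "norm x < 1")
  case False
  then show ?thesis
    using bump_eq_0[of k x] bump_grad_eq_0[OF k, of x] k by (simp add: Lagr_def not_less)
next
  case True
  define y where "y = max 0 (1 - x \<bullet> x)"
  have bump_x_pos: "bump k x > 0" by (rule bump_pos[OF True])
  have bump_x: "bump k x = y ^ k" by (simp add: bump_def bump_profile_def y_def)
  have y_pos: "y > 0" using bump_x_pos bump_x k by (cases "y = 0") (auto simp: y_def power_0_left)
  have y_le: "y \<le> 1" by (simp add: y_def)
  have norm_grad: "norm (bump_grad k x) = 2 * real k * y ^ (k - 1) * norm x"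
    by (simp add: bump_grad_def bump_profile_deriv_def y_def abs_mult)
  have grad_powr: "norm (bump_grad k x) powr r = (2 * real k * norm x) powr r * y powr (real (k - 1) * r)"
  proof -
    have "norm (bump_grad k x) powr r = (2 * real k * norm x) powr r * (y ^ (k - 1)) powr r"
      unfolding norm_grad using y_pos by (simp add: powr_mult[symmetric] mult_ac)
    also have "(y ^ (k - 1)) powr r = y powr (real (k - 1) * r)"
      using y_pos by (simp add: powr_realpow[symmetric] powr_powr)
    finally show ?thesis .
  qed
  have bump_powr: "bump k x powr (1 - r) = y powr (real k * (1 - r))"
    unfolding bump_x using y_pos by (simp add: powr_realpow[symmetric] powr_powr)
  have exponents: "y powr (real (k - 1) * r) * y powr (real k * (1 - r)) = y powr (real k - r)"
  proof -
    have "real (k - 1) * r + real k * (1 - r) = real k - r"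
      using k by (simp add: of_nat_diff algebra_simps)
    then show ?thesis using y_pos by (simp flip: powr_add)
  qed
  have y_powr_le: "y powr (real k - r) \<le> 1" using y_pos y_le kr by (intro powr_le1) auto
  have grad_factor_le: "(2 * real k * norm x) powr r \<le> (2 * real k) powr r"
    using True r by (intro powr_mono2) (auto intro: mult_left_le)
  have "norm (bump_grad k x) powr r * bump k x powr (1 - r) \<le> (2 * real k) powr r"
  proof -
    have "norm (bump_grad k x) powr r * bump k x powr (1 - r)
        = (2 * real k * norm x) powr r * y powr (real k - r)"
      unfolding grad_powr bump_powr exponents[symmetric] by (simp add: mult_ac)
    also have "\<dots> \<le> (2 * real k) powr r * 1"
      using y_powr_le grad_factor_le by (intro mult_mono) auto
    finally show ?thesis by simp
  qed
  moreover have "x \<in> cball 0 1" using True by simp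
  ultimately show ?thesis using bump_x_pos by (simp add: Lagr_def)
qed

lemma kin_bump_finite:
  assumes k: "k \<ge> 2" and kr: "real k \<ge> r" and r: "r > 1"
  shows "kin r (bump k :: 'a::euclidean_space \<Rightarrow> real) (bump_grad k) < \<infinity>"
proof -
  have "kin r (bump k :: 'a \<Rightarrow> real) (bump_grad k)
      \<le> (\<integral>\<^sup>+x. ennreal ((2 * real k) powr r) * indicator (cball (0::'a) 1) x \<partial>lebesgue)"
    unfolding kin_def by (intro nn_integral_mono Lagr_bump_le[OF k kr r])
  also have "\<dots> = ennreal ((2 * real k) powr r) * emeasure lebesgue (cball (0::'a) 1)"
    by (rule nn_integral_cmult_indicator) (simp add: fmeasurableD)
  also have "\<dots> < \<infinity>"
    using lmeasurable_cball[of "0::'a" 1] by (simp add: fmeasurable_def ennreal_mult_less_top)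
  finally show ?thesis .
qed

lemma not_AE_bump_eq_0: "\<not> (AE x in lebesgue. bump k (x::'a::euclidean_space) = 0)"
proof
  assume "AE x in lebesgue. bump k (x::'a) = 0"
  then have "AE x in lebesgue. x \<notin> ball (0::'a) 1"
    by eventually_elim (metis bump_pos less_irrefl mem_ball_0)
  moreover have "{x \<in> space lebesgue. \<not> (x \<notin> ball (0::'a) 1)} = ball 0 1"
    by (auto simp: mem_ball_0)
  moreover have "ball (0::'a) 1 \<in> sets lebesgue" by (simp add: fmeasurableD)
  ultimately have "emeasure lebesgue (ball (0::'a) 1) = 0"
    using AE_iff_measurable[of "ball (0::'a) 1" lebesgue "\<lambda>x. x \<notin> ball 0 1"] by simp
  then have "measure lebesgue (ball (0::'a) 1) = 0" by (simp add: measure_def)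
  moreover have "measure lebesgue (ball (0::'a) 1) = measure lborel (ball (0::'a) 1)"
    by (simp add: measure_completion)
  moreover have "measure lborel (ball (0::'a) 1) > 0" using content_ball_pos[of 1 "0::'a"] by simp
  ultimately show False by simp
qed

text \<open>Choosing \<open>k \<ge> r\<close> keeps \<open>|\<nabla>m|\<^sup>r m\<^sup>1\<^sup>-\<^sup>r \<sim> (1 - |x|\<^sup>2)\<^sup>k\<^sup>-\<^sup>r\<close> bounded for
  \<open>m = (1 - |x|\<^sup>2)\<^sub>+\<^sup>k\<close>.\<close>

lemma exists_admissible_kin_finite:
  assumes r: "r > 1" and q: "qhat DIM('a) r q0 > 0" and b: "b > 0"
  obtains m :: "'a::euclidean_space \<Rightarrow> real" and w where "admissible r q0 b m w" "kin r m w < \<infinity>"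
proof
  define k where "k = nat \<lceil>r\<rceil> + 2"
  have k: "k \<ge> 2" "real k \<ge> r" unfolding k_def using r by linarith+
  have m_meas[measurable]: "(bump k :: 'a \<Rightarrow> real) \<in> borel_measurable lebesgue"
    by (rule borel_measurable_lebesgue_continuous[OF continuous_on_bump])
  have g_meas: "(bump_grad k :: 'a \<Rightarrow> 'a) \<in> borel_measurable lebesgue"
    by (rule borel_measurable_lebesgue_continuous[OF continuous_on_bump_grad])
  have m_supp: "bump k x = 0" and g_supp: "bump_grad k x = 0" if "norm x > 1" for x :: 'a
    using bump_eq_0[of k x] bump_grad_eq_0[of k x] k that by auto
  have m_bound: "norm (bump k x) \<le> 1" for x :: 'a
    using bump_bounds[of k x] by simp
  have "Lp p (bump k :: 'a \<Rightarrow> real)" "Lp p (bump_grad k :: 'a \<Rightarrow> 'a)" if "p > 0" for p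
    using Lp_bounded_support[OF m_meas m_bound m_supp that]
      Lp_bounded_support[OF g_meas norm_bump_grad_le[OF k(1)] g_supp that] by auto
  moreover have "integrable lebesgue (\<lambda>x::'a. norm x powr b * bump k x)"
  proof (rule integrable_bounded_support)
    have [measurable]: "(\<lambda>x::'a. x) \<in> borel_measurable lebesgue"
      using id_borel_measurable_lebesgue by (simp add: id_def)
    show "(\<lambda>x::'a. norm x powr b * bump k x) \<in> borel_measurable lebesgue" by measurable
    show "norm (norm x powr b * bump k x) \<le> 1" for x :: 'a
    proof (cases "norm x \<le> 1")
      case True
      then have "norm x powr b \<le> 1" using b by (intro powr_le1) auto
      then show ?thesis using bump_bounds[of k x] by (simp add: abs_mult mult_le_one)
    qed (simp add: m_supp)
    show "norm x powr b * bump k x = 0" if "norm x > 1" for x :: 'a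
      using m_supp[OF that] by simp
  qed
  moreover have "weak_grad (bump k :: 'a \<Rightarrow> real) (bump_grad k)"
    using bump_has_derivative[OF k(1)] continuous_on_bump_grad by (rule weak_grad_classical)
  ultimately show "admissible r q0 b (bump k :: 'a \<Rightarrow> real) (bump_grad k)"
    unfolding admissible_def W1p_def
    using q bump_bounds not_AE_bump_eq_0[where 'a = 'a] by auto
  show "kin r (bump k :: 'a \<Rightarrow> real) (bump_grad k) < \<infinity>"
    using kin_bump_finite k r by blast
qed

section \<open>Optimising over dilations\<close>

text \<open>\<open>dilation_inf s a k\<close> is the minimum of \<open>u k - a u\<^sup>s\<close> over \<open>u > 0\<close>, attained at
  \<open>u = (s a / k)\<^sup>1\<^sup>/\<^sup>(\<^sup>1\<^sup>-\<^sup>s\<^sup>)\<close>.\<close>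

definition dilation_inf :: "real \<Rightarrow> real \<Rightarrow> real \<Rightarrow> real" where
  "dilation_inf s a k = - ((1 - s) * a * ((s * a / k) powr (1 / (1 - s))) powr s)"

lemma dilation_inf_le:
  assumes k: "k > 0" and a: "a > 0" and s: "0 < s" "s < 1" and u: "u > 0"
  shows "u * k - a * u powr s \<ge> dilation_inf s a k"
proof -
  define u0 where "u0 = (s * a / k) powr (1 / (1 - s))"
  have u0p: "u0 > 0" using k a s by (simp add: u0_def)
  have u0e: "u0 powr (1 - s) = s * a / k"
    using k a s by (simp add: u0_def powr_powr)
  have key: "a * s * u0 powr s / u0 = k"
  proof -
    have "u0 powr s / u0 = 1 / u0 powr (1 - s)"
      using u0p by (simp add: powr_diff)
    then show ?thesis using u0e k a s by (simp add: field_simps)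
  qed
  have Y: "(u / u0) powr s * 1 powr (1 - s) \<le> s * (u / u0) + (1 - s) * 1"
    by (rule Youngs_inequality_0) (use s u u0p in auto)
  have "u powr s = u0 powr s * (u / u0) powr s"
    using u u0p by (simp add: powr_divide)
  also have "\<dots> \<le> u0 powr s * (s * (u / u0) + (1 - s))"
    using Y u0p by (intro mult_left_mono) auto
  finally have "a * u powr s \<le> a * (u0 powr s * (s * (u / u0) + (1 - s)))"
    using a by (intro mult_left_mono) auto
  also have "\<dots> = u * (a * s * u0 powr s / u0) + (1 - s) * a * u0 powr s"
    using u0p by (simp add: field_simps)
  also have "\<dots> = u * k + (1 - s) * a * u0 powr s" by (simp add: key)
  finally have X: "a * u powr s \<le> u * k + (1 - s) * a * u0 powr s" .
  have "dilation_inf s a k = - ((1 - s) * a * u0 powr s)" unfolding dilation_inf_def u0_def ..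
  then show ?thesis using X by linarith
qed

lemma dilation_inf_attained:
  assumes k: "k > 0" and a: "a > 0" and s: "0 < s" "s < 1"
  shows "\<exists>u>0. u * k - a * u powr s = dilation_inf s a k"
proof -
  define u0 where "u0 = (s * a / k) powr (1 / (1 - s))"
  have u0p: "u0 > 0" using k a s by (simp add: u0_def)
  have u0e: "u0 powr (1 - s) = s * a / k"
    using k a s by (simp add: u0_def powr_powr)
  have key: "u0 * k = a * s * u0 powr s"
  proof -
    have "u0 = u0 powr s * u0 powr (1 - s)" using u0p by (simp flip: powr_add)
    then show ?thesis using u0e k by (simp add: field_simps)
  qed
  have "dilation_inf s a k = - ((1 - s) * a * u0 powr s)" unfolding dilation_inf_def u0_def ..
  also have "\<dots> = u0 * k - a * u0 powr s" using key by (simp add: algebra_simps)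
  finally show ?thesis using u0p by auto
qed

definition energy_const :: "real \<Rightarrow> real \<Rightarrow> real" where
  "energy_const s \<alpha> = (1 - s) * s powr (s / (1 - s)) * (\<alpha> + 1) powr (- 1 / (1 - s))"

lemma dilation_inf_eq:
  assumes k: "k > 0" and p: "p > 0" and s: "0 < s" "s < 1" and \<alpha>: "\<alpha> > -1"
  shows "dilation_inf s (p / (\<alpha> + 1)) k
     = - energy_const s \<alpha> * (k powr s / p) powr (- 1 / (1 - s))"
proof -
  let ?e = "s / (1 - s)"
  have a: "\<alpha> + 1 > 0" using \<alpha> by simp
  have "((s * (p / (\<alpha> + 1)) / k) powr (1 / (1 - s))) powr s = (s * (p / (\<alpha> + 1)) / k) powr ?e"
    using s by (simp add: powr_powr)
  also have "\<dots> = s powr ?e * p powr ?e * (\<alpha> + 1) powr (- ?e) * k powr (- ?e)"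
    using s k p a by (simp add: powr_mult powr_divide powr_minus divide_inverse inverse_powr)
  finally have minimiser_powr: "((s * (p / (\<alpha> + 1)) / k) powr (1 / (1 - s))) powr s
     = s powr ?e * p powr ?e * (\<alpha> + 1) powr (- ?e) * k powr (- ?e)" .
  have quotient_powr: "(k powr s / p) powr (- 1 / (1 - s)) = k powr (- ?e) * p powr (1 / (1 - s))"
  proof -
    have "(k powr s / p) powr (- 1 / (1 - s))
        = (k powr s) powr (- 1 / (1 - s)) / p powr (- 1 / (1 - s))"
      using k p by (simp add: powr_divide)
    also have "(k powr s) powr (- 1 / (1 - s)) = k powr (- ?e)"
      by (simp add: powr_powr)
    also have "p powr (- 1 / (1 - s)) = inverse (p powr (1 / (1 - s)))"
      by (simp add: powr_minus[symmetric])
    finally show ?thesis by (simp add: divide_inverse)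
  qed
  have p_powr: "p * p powr ?e = p powr (1 / (1 - s))"
  proof -
    have "p * p powr ?e = p powr (1 + ?e)" using p by (simp add: powr_add)
    moreover have "1 + ?e = 1 / (1 - s)" using s by (simp add: field_simps)
    ultimately show ?thesis by simp
  qed
  have \<alpha>_powr: "(\<alpha> + 1) powr (- ?e) / (\<alpha> + 1) = (\<alpha> + 1) powr (- 1 / (1 - s))"
  proof -
    have "(\<alpha> + 1) powr (- ?e) / (\<alpha> + 1) = (\<alpha> + 1) powr (- ?e - 1)"
      using a by (simp add: powr_diff)
    moreover have "- ?e - 1 = - 1 / (1 - s)" using s by (simp add: field_simps)
    ultimately show ?thesis by simp
  qed
  have regroup: "(1 - s) * (p / A) * (S * P * A' * K) = (1 - s) * S * (A' / A) * (K * (p * P))"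
    for S P A' K A :: real
    by (simp add: divide_inverse mult_ac)
  show ?thesis
    unfolding dilation_inf_def energy_const_def minimiser_powr quotient_powr regroup p_powr \<alpha>_powr
    by (simp add: mult_ac)
qed

lemma energy_const_pos: "0 < s \<Longrightarrow> s < 1 \<Longrightarrow> \<alpha> > -1 \<Longrightarrow> energy_const s \<alpha> > 0"
  by (simp add: energy_const_def)

lemma energy_const_powr:
  assumes s: "0 < s" "s < 1" and \<alpha>: "\<alpha> > -1"
  shows "energy_const s \<alpha> powr (s - 1) = (1 - s) powr (s - 1) * s powr (- s) * (\<alpha> + 1)"
proof -
  have "s / (1 - s) * (s - 1) = - s" "- 1 / (1 - s) * (s - 1) = 1"
    using s by (simp_all add: field_simps)
  then show ?thesis
    using s \<alpha> by (simp add: energy_const_def powr_mult powr_powr)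
qed

lemma quotient_eq_energy:
  assumes Q: "Q > 0" and s: "0 < s" "s < 1" and \<alpha>: "\<alpha> > -1"
  shows "Q = s / (1 + \<alpha>) * (energy_const s \<alpha> * Q powr (- 1 / (1 - s))) powr (s - 1)
             * ((1 - s) / s) powr (1 - s)"
proof -
  have "(- 1 / (1 - s)) * (s - 1) = 1" using s by (simp add: field_simps)
  then have "(Q powr (- 1 / (1 - s))) powr (s - 1) = Q"
    using Q by (simp add: powr_powr)
  then have energy_powr: "(energy_const s \<alpha> * Q powr (- 1 / (1 - s))) powr (s - 1)
      = (1 - s) powr (s - 1) * s powr (- s) * (\<alpha> + 1) * Q"
    using energy_const_pos[OF s \<alpha>] Q by (simp add: powr_mult energy_const_powr[OF s \<alpha>])
  have "s powr (s - 1) = inverse (s powr (1 - s))"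
    by (metis minus_diff_eq powr_minus)
  then have ratio_powr: "((1 - s) / s) powr (1 - s) = (1 - s) powr (1 - s) * s powr (s - 1)"
    unfolding powr_divide by (simp add: divide_inverse)
  have "s / (1 + \<alpha>) * ((1 - s) powr (s - 1) * s powr (- s) * (\<alpha> + 1) * Q)
        * ((1 - s) powr (1 - s) * s powr (s - 1))
      = ((1 - s) powr (s - 1) * (1 - s) powr (1 - s)) * (s powr (- s) * s * s powr (s - 1))
        * ((\<alpha> + 1) / (1 + \<alpha>)) * Q"
    by (simp add: divide_inverse mult_ac)
  also have "\<dots> = Q"
  proof -
    have "(1 - s) powr (s - 1) * (1 - s) powr (1 - s) = 1"
      using s by (simp flip: powr_add)
    moreover have "s powr (- s) * s * s powr (s - 1) = s powr (- s) * s powr 1 * s powr (s - 1)"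
      using s by simp
    moreover have "\<dots> = s powr (- s + 1 + (s - 1))" by (simp only: powr_add)
    ultimately show ?thesis using s \<alpha> by (simp add: add.commute)
  qed
  finally show ?thesis
    unfolding energy_powr ratio_powr by simp
qed

lemma E0_eq_ereal:
  assumes "kin (conj_exp r') m w = ennreal k" "potential \<alpha> m = ennreal p" "k \<ge> 0" "p \<ge> 0" "\<alpha> > -1"
  shows "E0 r' CH \<alpha> m w = ereal (C_L r' CH * k - p / (\<alpha> + 1))"
  using assms unfolding E0_def by simp

lemma E0_eq_MInfty:
  assumes "kin (conj_exp r') m w \<noteq> \<infinity>" "potential \<alpha> m = \<infinity>" "\<alpha> > -1"
  shows "E0 r' CH \<alpha> m w = -\<infinity>"
  using assms unfolding E0_def by (cases "kin (conj_exp r') m w") auto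

lemma E0_eq_PInfty:
  assumes "kin (conj_exp r') m w = \<infinity>" "potential \<alpha> m \<noteq> \<infinity>" "\<alpha> > -1" "C_L r' CH > 0"
  shows "E0 r' CH \<alpha> m w = \<infinity>"
  using assms unfolding E0_def by (cases "potential \<alpha> m") auto

lemma E0_less_PInfty:
  assumes "kin (conj_exp r') m w \<noteq> \<infinity>" "\<alpha> > -1"
  shows "E0 r' CH \<alpha> m w < \<infinity>"
  using assms unfolding E0_def
  by (cases "kin (conj_exp r') m w"; cases "potential \<alpha> m") auto

lemma e0_le_E0:
  fixes m :: "'a::euclidean_space \<Rightarrow> real"
  assumes "admissible_M (conj_exp r') q0 b M m w"
  shows "e0 TYPE('a) r' CH q0 b \<alpha> M \<le> E0 r' CH \<alpha> m w"
  unfolding e0_def using assms by (intro INF_lower2[of "(m, w)"]) auto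

lemma Gamma_le_GN_quot:
  fixes m :: "'a::euclidean_space \<Rightarrow> real"
  assumes "admissible (conj_exp r') q0 b m w"
  shows "Gamma TYPE('a) r' CH q0 b \<alpha> \<le> GN_quot r' CH \<alpha> m w"
  unfolding Gamma_def using assms by (intro INF_lower2[of "(m, w)"]) auto

lemma integral_pos_admissible:
  assumes adm: "admissible r q0 b m w"
  shows "(\<integral>x. m x \<partial>lebesgue) > 0"
proof -
  note m = admissible_measurable[OF adm]
  have "(\<lambda>x. norm (m x) powr 1) = m" using m(3) by (auto simp: fun_eq_iff)
  then have "integrable lebesgue m" using adm by (metis admissible_def Lp_def)
  moreover have "\<not> (AE x in lebesgue. m x = 0)" using adm by (simp add: admissible_def)
  ultimately have "(\<integral>x. m x \<partial>lebesgue) \<noteq> 0"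
    using integral_nonneg_eq_0_iff_AE m(3) by auto
  moreover have "(\<integral>x. m x \<partial>lebesgue) \<ge> 0" using m(3) by simp
  ultimately show ?thesis by simp
qed

lemma potential_pos_admissible:
  assumes adm: "admissible r q0 b m w" and \<alpha>: "\<alpha> > -1"
  shows "potential \<alpha> m \<noteq> 0"
proof
  note m = admissible_measurable[OF adm]
  assume "potential \<alpha> m = 0"
  then have "AE x in lebesgue. ennreal (m x powr (\<alpha> + 1)) = 0"
    using nn_integral_0_iff_AE[of "\<lambda>x. ennreal (m x powr (\<alpha> + 1))" lebesgue] m(1) by simp
  then have "AE x in lebesgue. m x = 0"
  proof (rule AE_mp, intro AE_I2 impI)
    fix x assume "ennreal (m x powr (\<alpha> + 1)) = 0"
    then show "m x = 0" using m(3)[of x] by (cases "m x = 0") auto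
  qed
  then show False using adm by (simp add: admissible_def)
qed

lemma potential_finite_Lp:
  assumes "Lp (\<alpha> + 1) m" "\<And>x. m x \<ge> 0"
  shows "potential \<alpha> m \<noteq> \<infinity>"
proof -
  have "integrable lebesgue (\<lambda>x. m x powr (\<alpha> + 1))"
    using assms by (simp add: Lp_def)
  then have "potential \<alpha> m = ennreal (\<integral>x. m x powr (\<alpha> + 1) \<partial>lebesgue)"
    by (rule nn_integral_eq_integral) auto
  then show ?thesis by simp
qed

lemma admissible_M_dilation:
  fixes m :: "'a::euclidean_space \<Rightarrow> real"
  assumes adm: "admissible_M r q0 b M m w" and r: "r > 0" and u: "u > 0"
  obtains m' :: "'a \<Rightarrow> real" and w' where "admissible_M r q0 b M m' w'"
    "kin r m' w' = ennreal u * kin r m w"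
    "potential \<alpha> m' = ennreal (u powr (real DIM('a) * \<alpha> / r)) * potential \<alpha> m"
proof -
  define t where "t = u powr (1 / r)"
  define c where "c = t powr real DIM('a)"
  have t: "t > 0" and c: "c > 0" using u by (simp_all add: t_def c_def)
  have a: "admissible r q0 b m w" and mass: "(\<integral>x. m x \<partial>lebesgue) = M"
    using adm by (auto simp: admissible_M_def)
  note m = admissible_measurable[OF a]
  have ct: "c / t ^ DIM('a) = 1" using t by (simp add: c_def powr_realpow)
  have "t powr r = u" using u r by (simp add: t_def powr_powr)
  then have "kin r (\<lambda>x. c * m (t *\<^sub>R x)) (\<lambda>x. (c * t) *\<^sub>R w (t *\<^sub>R x)) = ennreal u * kin r m w"
    unfolding kin_dilation[OF m(1,2) c t] using ct c by (simp add: mult.commute)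
  moreover have "c powr (\<alpha> + 1) / t ^ DIM('a) = u powr (real DIM('a) * \<alpha> / r)"
  proof -
    have "c powr (\<alpha> + 1) / t ^ DIM('a) = t powr (real DIM('a) * (\<alpha> + 1)) / t powr real DIM('a)"
      unfolding c_def powr_powr using powr_realpow[OF t] by simp
    also have "\<dots> = t powr (real DIM('a) * \<alpha>)"
      using t by (simp add: powr_diff[symmetric] algebra_simps)
    finally show ?thesis
      using u r by (simp add: t_def powr_powr)
  qed
  then have "potential \<alpha> (\<lambda>x. c * m (t *\<^sub>R x))
      = ennreal (u powr (real DIM('a) * \<alpha> / r)) * potential \<alpha> m"
    by (simp add: potential_dilation[OF m(1,3) c t])
  moreover have "admissible_M r q0 b M (\<lambda>x. c * m (t *\<^sub>R x)) (\<lambda>x. (c * t) *\<^sub>R w (t *\<^sub>R x))"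
    unfolding admissible_M_def
    using admissible_dilation[OF a c t] integral_comp_scaleR[OF t, of m] mass ct c by simp
  ultimately show ?thesis using that by blast
qed

lemma admissible_scale:
  assumes adm: "admissible r q0 b m w" and c: "c > 0"
  shows "admissible r q0 b (\<lambda>x. c * m x) (\<lambda>x. c *\<^sub>R w x)"
    and "kin r (\<lambda>x. c * m x) (\<lambda>x. c *\<^sub>R w x) = ennreal c * kin r m w"
    and "potential \<alpha> (\<lambda>x. c * m x) = ennreal (c powr (\<alpha> + 1)) * potential \<alpha> m"
  using admissible_dilation[OF adm c, of 1]
    kin_dilation[OF admissible_measurable(1,2)[OF adm] c, of 1 r]
    potential_dilation[OF admissible_measurable(1,3)[OF adm] c, of 1 \<alpha>]
  by simp_all

lemma GN_quot_eq:
  fixes m :: "'a::euclidean_space \<Rightarrow> real"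
  assumes "kin (conj_exp r') m w = ennreal k" "k \<ge> 0"
  defines "r \<equiv> conj_exp r'" and "n \<equiv> real DIM('a)"
  shows "GN_quot r' CH \<alpha> m w = ereal ((C_L r' CH * k) powr (n * \<alpha> / r)
      * (\<integral>x. m x \<partial>lebesgue) powr (((\<alpha> + 1) * r - n * \<alpha>) / r) / enn2real (potential \<alpha> m))"
  using assms unfolding GN_quot_def Let_def by simp

text \<open>The powers of \<open>c\<close> contributed by \<open>K\<close>, the mass and \<open>P\<close> cancel.\<close>

lemma GN_quot_scale:
  fixes m :: "'a::euclidean_space \<Rightarrow> real"
  assumes adm: "admissible (conj_exp r') q0 b m w" and r': "r' > 1" and CH: "CH > 0" and c: "c > 0"
  shows "GN_quot r' CH \<alpha> (\<lambda>x. c * m x) (\<lambda>x. c *\<^sub>R w x) = GN_quot r' CH \<alpha> m w"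
proof (cases "kin (conj_exp r') m w")
  case (real k)
  define r n where "r = conj_exp r'" and "n = real DIM('a)"
  have r: "r > 0" using r' by (simp add: r_def conj_exp_def)
  have CL: "C_L r' CH > 0" using r' CH by (simp add: C_L_def conj_exp_def)
  have kin_c: "kin (conj_exp r') (\<lambda>x. c * m x) (\<lambda>x. c *\<^sub>R w x) = ennreal (c * k)"
    using admissible_scale(2)[OF adm c] real c by (simp add: ennreal_mult)
  have "n * \<alpha> / r + ((\<alpha> + 1) * r - n * \<alpha>) / r = \<alpha> + 1"
    using r by (simp add: field_simps)
  then have "c powr (n * \<alpha> / r) * c powr (((\<alpha> + 1) * r - n * \<alpha>) / r) / c powr (\<alpha> + 1) = 1"
    using c by (simp flip: powr_add)
  then have "(C_L r' CH * (c * k)) powr (n * \<alpha> / r)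
        * (c * (\<integral>x. m x \<partial>lebesgue)) powr (((\<alpha> + 1) * r - n * \<alpha>) / r)
        / (c powr (\<alpha> + 1) * enn2real (potential \<alpha> m))
      = (C_L r' CH * k) powr (n * \<alpha> / r)
        * (\<integral>x. m x \<partial>lebesgue) powr (((\<alpha> + 1) * r - n * \<alpha>) / r) / enn2real (potential \<alpha> m)"
    using c CL real integral_pos_admissible[OF adm]
    by (simp add: powr_mult mult_ac divide_simps)
  then show ?thesis
    using real c kin_c admissible_scale(3)[OF adm c, of \<alpha>]
    by (simp add: GN_quot_eq r_def n_def enn2real_mult)
next
  case top
  then show ?thesis
    using admissible_scale(2)[OF adm c] c by (simp add: GN_quot_def ennreal_mult_top)
qed

section \<open>A minimiser of the energy attains the Gagliardo--Nirenberg constant\<close>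

locale GN_minimiser =
  fixes r' CH q0 b \<alpha> M :: real and mb :: "'a::euclidean_space \<Rightarrow> real" and wb :: "'a \<Rightarrow> 'a"
  assumes r'_gt_1: "r' > 1" and CH_pos: "CH > 0" and b_pos: "b > 0"
    and qhat_pos: "qhat DIM('a) (conj_exp r') q0 > 0"
    and \<alpha>_pos: "0 < \<alpha>" and \<alpha>_less: "\<alpha> < conj_exp r' / DIM('a)" and M_pos: "M > 0"
    and admissible_M_mb: "admissible_M (conj_exp r') q0 b M mb wb"
    and minimiser: "E0 r' CH \<alpha> mb wb = e0 TYPE('a) r' CH q0 b \<alpha> M"
    and potential_mb_finite: "potential \<alpha> mb \<noteq> \<infinity>"
begin

abbreviation "r \<equiv> conj_exp r'"
abbreviation "CL \<equiv> C_L r' CH"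
abbreviation "Kmin \<equiv> enn2real (kin r mb wb)"
abbreviation "Pmin \<equiv> enn2real (potential \<alpha> mb)"
abbreviation "emin \<equiv> CL * Kmin - Pmin / (\<alpha> + 1)"
abbreviation "Qmin \<equiv> (CL * Kmin) powr (DIM('a) * \<alpha> / r) / Pmin"

lemma r_gt_1: "r > 1"
  using r'_gt_1 by (simp add: conj_exp_def)

lemma s_pos: "0 < DIM('a) * \<alpha> / r"
  using \<alpha>_pos r_gt_1 by simp

lemma s_less_1: "DIM('a) * \<alpha> / r < 1"
  using \<alpha>_less r_gt_1 by (simp add: field_simps)

lemma CL_pos: "CL > 0"
  using r'_gt_1 CH_pos by (simp add: C_L_def conj_exp_def)

lemma admissible_mb: "admissible r q0 b mb wb"
  using admissible_M_mb by (simp add: admissible_M_def)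

lemma e0_less_PInfty: "e0 TYPE('a) r' CH q0 b \<alpha> M < \<infinity>"
proof -
  obtain m :: "'a \<Rightarrow> real" and w where adm: "admissible r q0 b m w" and kin: "kin r m w < \<infinity>"
    using exists_admissible_kin_finite[OF r_gt_1 qhat_pos b_pos] by blast
  define c where "c = M / (\<integral>x. m x \<partial>lebesgue)"
  have c: "c > 0" using integral_pos_admissible[OF adm] M_pos by (simp add: c_def)
  have "admissible_M r q0 b M (\<lambda>x. c * m x) (\<lambda>x. c *\<^sub>R w x)"
    unfolding admissible_M_def using admissible_scale(1)[OF adm c] integral_pos_admissible[OF adm]
    by (simp add: c_def)
  then have "e0 TYPE('a) r' CH q0 b \<alpha> M \<le> E0 r' CH \<alpha> (\<lambda>x. c * m x) (\<lambda>x. c *\<^sub>R w x)"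
    by (rule e0_le_E0)
  also have "\<dots> < \<infinity>"
    using admissible_scale(2)[OF adm c] kin \<alpha>_pos
    by (intro E0_less_PInfty) (auto simp: ennreal_mult_eq_top_iff)
  finally show ?thesis .
qed

lemma kin_mb_finite: "kin r mb wb \<noteq> \<infinity>"
proof
  assume "kin r mb wb = \<infinity>"
  then have "E0 r' CH \<alpha> mb wb = \<infinity>"
    by (rule E0_eq_PInfty[OF _ potential_mb_finite]) (use \<alpha>_pos CL_pos in auto)
  then show False using minimiser e0_less_PInfty by simp
qed

lemma kin_mb: "kin r mb wb = ennreal Kmin" and potential_mb: "potential \<alpha> mb = ennreal Pmin"
  using kin_mb_finite potential_mb_finite by (simp_all add: ennreal_enn2real_if)

lemma e0_eq_emin: "e0 TYPE('a) r' CH q0 b \<alpha> M = ereal emin"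
  using minimiser E0_eq_ereal[OF kin_mb potential_mb] \<alpha>_pos by simp

lemma emin_le_dilated_energy:
  fixes m :: "'a \<Rightarrow> real"
  assumes adm: "admissible_M r q0 b M m w" and k: "kin r m w = ennreal k" "k \<ge> 0"
    and p: "potential \<alpha> m = ennreal p" "p \<ge> 0" and u: "u > 0"
  shows "emin \<le> u * (CL * k) - p / (\<alpha> + 1) * u powr (DIM('a) * \<alpha> / r)"
proof -
  have "r > 0" using r_gt_1 by simp
  then obtain m' :: "'a \<Rightarrow> real" and w' where adm': "admissible_M r q0 b M m' w'"
    and k': "kin r m' w' = ennreal u * kin r m w"
    and p': "potential \<alpha> m' = ennreal (u powr (DIM('a) * \<alpha> / r)) * potential \<alpha> m"
    by (rule admissible_M_dilation[OF adm _ u])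
  have "kin r m' w' = ennreal (u * k)"
    unfolding k' k using u k by (simp add: ennreal_mult)
  moreover have "potential \<alpha> m' = ennreal (u powr (DIM('a) * \<alpha> / r) * p)"
    unfolding p' p using p by (simp add: ennreal_mult)
  ultimately have "E0 r' CH \<alpha> m' w' = ereal (CL * (u * k) - u powr (DIM('a) * \<alpha> / r) * p / (\<alpha> + 1))"
    using u k p \<alpha>_pos by (intro E0_eq_ereal) auto
  moreover have "ereal emin \<le> E0 r' CH \<alpha> m' w'"
    using e0_le_E0[OF adm', of CH \<alpha>] unfolding e0_eq_emin .
  ultimately show ?thesis by (simp add: algebra_simps)
qed

lemma potential_finite:
  fixes m :: "'a \<Rightarrow> real"
  assumes adm: "admissible_M r q0 b M m w" and "kin r m w \<noteq> \<infinity>"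
  shows "potential \<alpha> m \<noteq> \<infinity>"
proof
  assume "potential \<alpha> m = \<infinity>"
  then have "E0 r' CH \<alpha> m w = -\<infinity>"
    using assms \<alpha>_pos by (intro E0_eq_MInfty) auto
  then show False
    using e0_le_E0[OF adm, of CH \<alpha>] by (simp add: e0_eq_emin)
qed

text \<open>Since \<open>e\<^sub>0\<close> is finite, no pair of mass \<open>M\<close> can have vanishing kinetic energy:
  dilating it would drive the energy to \<open>-\<infinity>\<close>.\<close>

lemma emin_le_dilation_inf:
  fixes m :: "'a \<Rightarrow> real"
  assumes adm: "admissible_M r q0 b M m w" and k: "kin r m w = ennreal k" "k \<ge> 0"
    and p: "potential \<alpha> m = ennreal p"
  shows "CL * k > 0" and "p > 0"
    and "emin \<le> dilation_inf (DIM('a) * \<alpha> / r) (p / (\<alpha> + 1)) (CL * k)"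
proof -
  show p_pos: "p > 0"
    using potential_pos_admissible[of r q0 b m w \<alpha>] adm p \<alpha>_pos
    by (cases "p > 0") (auto simp: admissible_M_def ennreal_eq_0_iff)
  then have a: "p / (\<alpha> + 1) > 0" using \<alpha>_pos by simp
  note dilated = emin_le_dilated_energy[OF adm k p less_imp_le[OF p_pos]]
  show k_pos: "CL * k > 0"
  proof (rule ccontr)
    assume "\<not> CL * k > 0"
    then have "CL * k = 0" using CL_pos k(2) by (simp add: zero_less_mult_iff)
    have inverse_powr: "c * ((E / c) powr (1 / \<sigma>)) powr \<sigma> = E"
      if "c > 0" "\<sigma> > 0" "E > 0" for c \<sigma> E :: real
      using that by (simp add: powr_powr)
    define U where "U = ((\<bar>emin\<bar> + 1) / (p / (\<alpha> + 1))) powr (1 / (DIM('a) * \<alpha> / r))"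
    have "p / (\<alpha> + 1) * U powr (DIM('a) * \<alpha> / r) = \<bar>emin\<bar> + 1"
      unfolding U_def by (rule inverse_powr[OF a s_pos]) simp
    moreover have "U > 0" using p_pos \<alpha>_pos by (simp add: U_def add_pos_nonneg)
    ultimately show False
      using dilated[of U] \<open>CL * k = 0\<close> by simp
  qed
  obtain u where "u > 0" "u * (CL * k) - p / (\<alpha> + 1) * u powr (DIM('a) * \<alpha> / r)
      = dilation_inf (DIM('a) * \<alpha> / r) (p / (\<alpha> + 1)) (CL * k)"
    using dilation_inf_attained[OF k_pos a s_pos s_less_1] by blast
  then show "emin \<le> dilation_inf (DIM('a) * \<alpha> / r) (p / (\<alpha> + 1)) (CL * k)"
    using dilated by metis
qed

lemma emin_eq_dilation_inf: "emin = dilation_inf (DIM('a) * \<alpha> / r) (Pmin / (\<alpha> + 1)) (CL * Kmin)"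
proof -
  have "CL * Kmin > 0" "Pmin > 0"
    and "emin \<le> dilation_inf (DIM('a) * \<alpha> / r) (Pmin / (\<alpha> + 1)) (CL * Kmin)"
    using emin_le_dilation_inf[OF admissible_M_mb kin_mb _ potential_mb] by auto
  moreover have "dilation_inf (DIM('a) * \<alpha> / r) (Pmin / (\<alpha> + 1)) (CL * Kmin)
      \<le> 1 * (CL * Kmin) - Pmin / (\<alpha> + 1) * 1 powr (DIM('a) * \<alpha> / r)"
    using calculation \<alpha>_pos s_pos s_less_1 by (intro dilation_inf_le) auto
  ultimately show ?thesis by simp
qed

lemma emin_eq_quotient:
  "emin = - energy_const (DIM('a) * \<alpha> / r) \<alpha> * Qmin powr (- 1 / (1 - DIM('a) * \<alpha> / r))"
  using emin_le_dilation_inf(1,2)[OF admissible_M_mb kin_mb _ potential_mb] \<alpha>_pos s_pos s_less_1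
  by (simp add: emin_eq_dilation_inf dilation_inf_eq)

text \<open>The optimal dilation of a pair of mass \<open>M\<close> has energy \<open>-c Q\<^sup>-\<^sup>1\<^sup>/\<^sup>(\<^sup>1\<^sup>-\<^sup>s\<^sup>)\<close> with
  \<open>Q = (C\<^sub>L K)\<^sup>s / P\<close>; this is at least \<open>e\<^sub>0 = -c Qmin\<^sup>-\<^sup>1\<^sup>/\<^sup>(\<^sup>1\<^sup>-\<^sup>s\<^sup>)\<close>.\<close>

lemma Qmin_le:
  fixes m :: "'a \<Rightarrow> real"
  assumes adm: "admissible_M r q0 b M m w" and k: "kin r m w = ennreal k" "k \<ge> 0"
    and p: "potential \<alpha> m = ennreal p"
  shows "Qmin \<le> (CL * k) powr (DIM('a) * \<alpha> / r) / p"
proof (rule ccontr)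
  let ?s = "DIM('a) * \<alpha> / r"
  note A = emin_le_dilation_inf[OF adm k p]
  assume "\<not> Qmin \<le> (CL * k) powr ?s / p"
  then have "Qmin powr (- 1 / (1 - ?s)) < ((CL * k) powr ?s / p) powr (- 1 / (1 - ?s))"
    using A(1,2) s_less_1 by (intro powr_less_mono2_neg) (auto intro!: divide_pos_pos)
  then have "- energy_const ?s \<alpha> * ((CL * k) powr ?s / p) powr (- 1 / (1 - ?s)) < emin"
    using energy_const_pos[OF s_pos s_less_1, of \<alpha>] \<alpha>_pos by (simp add: emin_eq_quotient)
  then show False
    using A \<alpha>_pos s_pos s_less_1 by (simp add: dilation_inf_eq)
qed

lemma GN_quot_mb: "GN_quot r' CH \<alpha> mb wb = ereal (Qmin * M powr (((\<alpha> + 1) * r - DIM('a) * \<alpha>) / r))"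
  using GN_quot_eq[OF kin_mb] admissible_M_mb potential_mb by (simp add: admissible_M_def)

lemma GN_quot_mb_le:
  fixes m :: "'a \<Rightarrow> real"
  assumes adm: "admissible r q0 b m w"
  shows "GN_quot r' CH \<alpha> mb wb \<le> GN_quot r' CH \<alpha> m w"
proof (cases "kin r m w")
  case (real k0)
  let ?\<beta> = "((\<alpha> + 1) * r - DIM('a) * \<alpha>) / r"
  define c where "c = M / (\<integral>x. m x \<partial>lebesgue)"
  have c: "c > 0" using integral_pos_admissible[OF adm] M_pos by (simp add: c_def)
  have adm_c: "admissible_M r q0 b M (\<lambda>x. c * m x) (\<lambda>x. c *\<^sub>R w x)"
    unfolding admissible_M_def using admissible_scale(1)[OF adm c] integral_pos_admissible[OF adm]
    by (simp add: c_def)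
  have k: "kin r (\<lambda>x. c * m x) (\<lambda>x. c *\<^sub>R w x) = ennreal (c * k0)" "c * k0 \<ge> 0"
    using admissible_scale(2)[OF adm c] real c by (simp_all add: ennreal_mult)
  then obtain p where p: "potential \<alpha> (\<lambda>x. c * m x) = ennreal p"
    using potential_finite[OF adm_c] by (cases "potential \<alpha> (\<lambda>x. c * m x)") auto
  have "p > 0" using emin_le_dilation_inf(2)[OF adm_c k p] .
  then have "GN_quot r' CH \<alpha> (\<lambda>x. c * m x) (\<lambda>x. c *\<^sub>R w x)
      = ereal ((CL * (c * k0)) powr (DIM('a) * \<alpha> / r) / p * M powr ?\<beta>)"
    using GN_quot_eq[OF k] adm_c p by (simp add: admissible_M_def)
  moreover have "Qmin * M powr ?\<beta> \<le> (CL * (c * k0)) powr (DIM('a) * \<alpha> / r) / p * M powr ?\<beta>"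
    using Qmin_le[OF adm_c k p] by (intro mult_right_mono) auto
  ultimately show ?thesis
    using GN_quot_scale[OF adm r'_gt_1 CH_pos c] by (simp add: GN_quot_mb)
next
  case top
  then show ?thesis by (simp add: GN_quot_def)
qed

lemma Gamma_eq_GN_quot_mb: "Gamma TYPE('a) r' CH q0 b \<alpha> = GN_quot r' CH \<alpha> mb wb"
  using Gamma_le_GN_quot[OF admissible_mb] GN_quot_mb_le
  by (auto simp: Gamma_def intro!: antisym INF_greatest)

lemma Qmin_eq:
  "Qmin = DIM('a) * \<alpha> / r / (1 + \<alpha>) * (- emin) powr (DIM('a) * \<alpha> / r - 1)
      * ((1 - DIM('a) * \<alpha> / r) / (DIM('a) * \<alpha> / r)) powr (1 - DIM('a) * \<alpha> / r)"
proof -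
  have "Qmin > 0"
    using emin_le_dilation_inf(1,2)[OF admissible_M_mb kin_mb _ potential_mb]
    by (auto intro!: divide_pos_pos)
  from quotient_eq_energy[OF this s_pos s_less_1] \<alpha>_pos show ?thesis
    by (simp add: emin_eq_quotient)
qed

lemma Gamma_eq:
  "Gamma TYPE('a) r' CH q0 b \<alpha> =
    ereal (DIM('a) * \<alpha> * (- real_of_ereal (e0 TYPE('a) r' CH q0 b \<alpha> M)) powr ((DIM('a) * \<alpha> - r) / r)
      * M powr (((\<alpha> + 1) * r - DIM('a) * \<alpha>) / r) / (r * (1 + \<alpha>))
      * ((r - DIM('a) * \<alpha>) / (DIM('a) * \<alpha>)) powr ((r - DIM('a) * \<alpha>) / r))"
proof -
  let ?s = "DIM('a) * \<alpha> / r"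
  have exponents: "(DIM('a) * \<alpha> - r) / r = ?s - 1" "(r - DIM('a) * \<alpha>) / r = 1 - ?s"
    "(r - DIM('a) * \<alpha>) / (DIM('a) * \<alpha>) = (1 - ?s) / ?s"
    using r_gt_1 \<alpha>_pos by (simp_all add: field_simps)
  have factors: "DIM('a) * \<alpha> * X * Y / (r * (1 + \<alpha>)) * Z = ?s / (1 + \<alpha>) * X * Z * Y" for X Y Z
    by (simp add: field_simps)
  show ?thesis
    unfolding exponents factors Gamma_eq_GN_quot_mb GN_quot_mb Qmin_eq e0_eq_emin by simp
qed

end

theorem lemma4p1:
  fixes r' CH q0 b \<alpha> M lam :: real
    and mb :: "'a::euclidean_space \<Rightarrow> real" and wb :: "'a \<Rightarrow> 'a" and ub :: "'a \<Rightarrow> real"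
  defines "r \<equiv> conj_exp r'" and "n \<equiv> real DIM('a)"
  assumes r': "r' > 1" and CH: "CH > 0" and b: "b > 0"
    and q0: "r = n \<longrightarrow> 2 * n / (n + 2) < q0 \<and> q0 < n"
    and n2: "DIM('a) \<ge> 2"
    and alpha: "0 < \<alpha>" "\<alpha> < r / n" and M: "M > 0"
    and adm: "admissible_M r q0 b M mb wb"
    and minimizer: "E0 r' CH \<alpha> mb wb = e0 TYPE('a) r' CH q0 b \<alpha> M"
    and lam_neg: "lam < 0"
    and u_C2: "C2_fun ub" and u_below: "\<exists>c. \<forall>x. c \<le> ub x"
    and m_sob: "\<forall>p\<ge>1. W1p p mb"
    and m_decay: "\<exists>c1 c2. c1 > 0 \<and> c2 > 0 \<and> (\<forall>x. 0 < mb x \<and> mb x \<le> c1 * exp (- c2 * norm x))"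
    and w_def: "AE x in lebesgue. wb x = (- (CH * r' * mb x * norm (grad ub x) powr (r' - 2))) *\<^sub>R grad ub x"
    and HJB: "\<forall>x. - lap ub x + CH * norm (grad ub x) powr r' + lam = - (mb x powr \<alpha>)"
    and FP: "\<exists>g. weak_grad mb g \<and> (\<forall>\<phi>. test_fun \<phi> \<longrightarrow>
              (\<integral>x. g x \<bullet> grad \<phi> x \<partial>lebesgue)
              + CH * r' * (\<integral>x. mb x * norm (grad ub x) powr (r' - 2) * (grad ub x \<bullet> grad \<phi> x) \<partial>lebesgue) = 0)"
    and mass: "(\<integral>x. mb x \<partial>lebesgue) = M"
  shows "GN_quot r' CH \<alpha> mb wb = Gamma TYPE('a) r' CH q0 b \<alpha>
    \<and> Gamma TYPE('a) r' CH q0 b \<alpha> =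
        ereal (n * \<alpha> * (- real_of_ereal (e0 TYPE('a) r' CH q0 b \<alpha> M)) powr ((n * \<alpha> - r) / r)
               * M powr (((\<alpha> + 1) * r - n * \<alpha>) / r) / (r * (1 + \<alpha>))
               * ((r - n * \<alpha>) / (n * \<alpha>)) powr ((r - n * \<alpha>) / r))"
proof -
  have r: "r > 1" using r' by (simp add: r_def conj_exp_def)
  have n: "n > 0" by (simp add: n_def)
  have "qhat DIM('a) r q0 > 0"
  proof -
    have "2 * n / (n + 2) > 0" using n by simp
    then have "r = n \<Longrightarrow> q0 > 0" using q0 by linarith
    then show ?thesis using r n by (auto simp: qhat_def n_def)
  qed
  moreover have "Lp (\<alpha> + 1) mb"
    using m_sob alpha by (simp add: W1p_def)
  then have "potential \<alpha> mb \<noteq> \<infinity>"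
    using adm by (intro potential_finite_Lp) (auto simp: admissible_M_def admissible_def)
  ultimately interpret GN_minimiser r' CH q0 b \<alpha> M mb wb
    using r' CH b alpha M adm minimizer by unfold_locales (simp_all add: r_def n_def)
  show ?thesis
    using Gamma_eq_GN_quot_mb Gamma_eq by (simp add: r_def n_def)
qed

end
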